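(* Let $\mathcal Y$ be finite-dimensional. Let $p\in[1,\infty]$ and suppose $c_0(\mathcal Z)\cap B^p(\mathcal Z)\subseteq\underline{\mathcal Z}\subseteq\ell^p(\mathcal Z)$. Let $H:\underline{\mathcal Z}\to\mathcal Y$ be a linear functional. (i) If $p=1$: $H$ has the $1$-weighted FMP if and only if it has a (proper) convolution representation $\underline\kappa$ with $\lim_{t\to-\infty}\|\kappa_t\|_{op}=0$. Furthermore, the following are equivalent: $H$ is $1$-continuous; $H$ has a (proper) convolution representation with $\|\underline\kappa\|_\infty<\infty$; $H$ has the minimal FMP and is minimally continuous. (ii) If $p\in(1,\infty)$ and $q\in(1,\infty)$ is its Hölder conjugate ($1/p+1/q=1$), the following are equivalent: $H$ has the $p$-weighted FMP; $H$ is $p$-continuous; $H$ has a (proper) convolution representation with $\|\underline\kappa\|_q<\infty$; $H$ has the minimal FMP and is minimally continuous. (iii) If $p=\infty$, the following are equivalent: $H$ has the $\infty$-weighted FMP; $H$ has a (proper) convolution representation with $\|\underline\kappa\|_1<\infty$; $H$ has the minimal FMP and is minimally continuous. Furthermore, if in addition $\underline{\mathcal Z}\subseteq c_0(\mathcal Z)$, then $H$ has the $\infty$-weighted FMP if and only if it is $\infty$-continuous.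
   Context: Let $(\mathcal Z,\|\cdot\|)$ and $(\mathcal Y,\|\cdot\|_{\mathcal Y})$ be normed vector spaces over $\mathbb R$ and $\mathcal B=\{z\in\mathcal Z:\|z\|\le1\}$. Let $\mathbb Z_-=\{0,-1,-2,\dots\}$; elements of $\mathcal Z^{\mathbb Z_-}$ are sequences $\underline z=(z_t)_{t\le0}$. For $t\in\mathbb Z_-$, $\delta^t:\mathcal Z\to\mathcal Z^{\mathbb Z_-}$ maps $z$ to the sequence whose entry at time $t$ is $z$ and all other entries are $0$. Standing assumption: $\underline{\mathcal Z}\subseteq\mathcal Z^{\mathbb Z_-}$ is a set such that (a) $\underline{\mathcal Z}$ is convex and $\underline{\mathcal Z}=\{-\underline z:\underline z\in\underline{\mathcal Z}\}$; (b) $\delta^t(\mathcal B)\subseteq\underline{\mathcal Z}$ for all $t\in\mathbb Z_-$; (c) for every $\underline z\in\underline{\mathcal Z}$ and every $J\subseteq\mathbb Z_-$, the sequence $\sum_{t\in J}\delta^t(z_t)$ (equal to $z_t$ at times $t\in J$ and $0$ elsewhere) belongs to $\underline{\mathcal Z}$. A functional $H:\underline{\mathcal Z}\to\mathcal Y$ is linear if it is the restriction of a linear map defined on the linear span of $\underline{\mathcal Z}$. $L(\mathcal Z,\mathcal Y)$ is the space of continuous linear maps $\mathcal Z\to\mathcal Y$ with operator norm $\|\cdot\|_{op}$; for $\underline\kappa\in L(\mathcal Z,\mathcal Y)^{\mathbb Z_-}$ and $q\in[1,\infty)$, $\|\underline\kappa\|_q=(\sum_{t\le0}\|\kappa_t\|_{op}^q)^{1/q}$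 and $\|\underline\kappa\|_\infty=\sup_{t\le0}\|\kappa_t\|_{op}$. $H$ has a formal convolution representation if there is $\underline\kappa\in L(\mathcal Z,\mathcal Y)^{\mathbb Z_-}$ with $H(\underline z)=\lim_{T\to-\infty}\sum_{t=T}^0\kappa_t(z_t)$ for all $\underline z\in\underline{\mathcal Z}$; it has a (proper) convolution representation if in addition $\sum_{t\le0}\|\kappa_t(z_t)\|_{\mathcal Y}<\infty$ for all $\underline z\in\underline{\mathcal Z}$. $H$ is minimally continuous if $H\circ\delta^t:\mathcal B\to\mathcal Y$ is continuous for every $t\in\mathbb Z_-$. $H$ has the minimal fading memory property (minimal FMP) if $H(\sum_{t=T}^0\delta^t(z_t))\to H(\underline z)$ as $T\to-\infty$ for every $\underline z\in\underline{\mathcal Z}$. For $p\in[1,\infty]$, $\ell^p(\mathcal Z)$ is the set of $\underline z$ with $\|\underline z\|_p=(\sum_{t\le0}\|z_t\|^p)^{1/p}<\infty$ (for $p=\infty$: $\|\underline z\|_\infty=\sup_{t\le0}\|z_t\|<\infty$); $B^p(\mathcal Z)=\{\underline z\in\ell^p(\mathcal Z):\|\underline z\|_p\le1\}$; $c_0(\mathcal Z)$ is the set of sequences with $\|z_t\|\to0$ as $t\to-\infty$. A weighting sequence is a monotone $\underline w\in(0,1]^{\mathbb Z_-}$ with $w_t\to0$ as $t\to-\infty$; set $\|\underline z\|_{p,\underline w}=(\sum_{t\le0}w_t\|z_t\|^p)^{1/p}$ for $p<\infty$ and $\|\underline z\|_{\infty,\underline w}=\sup_{t\le0}w_t\|z_t\|$.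 $H$ is $p$-continuous if $\underline{\mathcal Z}\subseteq\ell^p(\mathcal Z)$ and $H$ is continuous for the topology induced by $\|\cdot\|_p$. $H$ has the $p$-weighted FMP if $\underline{\mathcal Z}\subseteq\ell^p(\mathcal Z)$ and there is a weighting sequence $\underline w$ such that $H$ is continuous for the topology induced by $\|\cdot\|_{p,\underline w}$. *)

theory Defs
  imports "HOL-Analysis.Analysis"
begin

text \<open>Sequences indexed by Z_- = {0,-1,-2,...} are represented as functions on nat:
  the entry at time t = -n is stored at index n. Thus t \<rightarrow> -\<infinity> corresponds to n \<rightarrow> \<infinity>.\<close>

definition delta :: "nat \<Rightarrow> 'z::real_normed_vector \<Rightarrow> nat \<Rightarrow> 'z" where
  "delta t z = (\<lambda>k. if k = t then z else 0)"

definition restrict_seq :: "nat set \<Rightarrow> (nat \<Rightarrow> 'z::real_normed_vector) \<Rightarrow> nat \<Rightarrow> 'z" where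
  "restrict_seq J z = (\<lambda>k. if k \<in> J then z k else 0)"

text \<open>Truncation sum_{t=T}^0 delta^t(z_t), i.e. keep the entries at indices n \<le> N.\<close>
definition trunc :: "nat \<Rightarrow> (nat \<Rightarrow> 'z::real_normed_vector) \<Rightarrow> nat \<Rightarrow> 'z" where
  "trunc N z = (\<lambda>k. if k \<le> N then z k else 0)"

definition std_assm :: "(nat \<Rightarrow> 'z::real_normed_vector) set \<Rightarrow> bool" where
  "std_assm Zs \<longleftrightarrow>
     (\<forall>x\<in>Zs. \<forall>y\<in>Zs. \<forall>u::real. 0 \<le> u \<and> u \<le> 1 \<longrightarrow> (\<lambda>n. u *\<^sub>R x n + (1 - u) *\<^sub>R y n) \<in> Zs)
   \<and> (\<forall>x\<in>Zs. (\<lambda>n. - x n) \<in> Zs)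
   \<and> (\<forall>t. \<forall>z. norm z \<le> 1 \<longrightarrow> delta t z \<in> Zs)
   \<and> (\<forall>x\<in>Zs. \<forall>J. restrict_seq J x \<in> Zs)"

text \<open>Restriction of a linear map defined on all sequences (equivalently, on the span of Zs).\<close>
definition linear_functional :: "(nat \<Rightarrow> 'z::real_normed_vector) set \<Rightarrow> ((nat \<Rightarrow> 'z) \<Rightarrow> 'y::real_normed_vector) \<Rightarrow> bool" where
  "linear_functional Zs H \<longleftrightarrow>
     (\<exists>L :: (nat \<Rightarrow> 'z) \<Rightarrow> 'y.
        (\<forall>x y. L (\<lambda>n. x n + y n) = L x + L y)
      \<and> (\<forall>c x. L (\<lambda>n. c *\<^sub>R x n) = c *\<^sub>R L x)
      \<and> (\<forall>z\<in>Zs. H z = L z))"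

definition formal_conv_rep :: "(nat \<Rightarrow> 'z::real_normed_vector) set \<Rightarrow> ((nat \<Rightarrow> 'z) \<Rightarrow> 'y::real_normed_vector) \<Rightarrow> (nat \<Rightarrow> 'z \<Rightarrow> 'y) \<Rightarrow> bool" where
  "formal_conv_rep Zs H \<kappa> \<longleftrightarrow> (\<forall>n. bounded_linear (\<kappa> n)) \<and>
     (\<forall>z\<in>Zs. (\<lambda>T. \<Sum>n\<le>T. \<kappa> n (z n)) \<longlonglongrightarrow> H z)"

definition conv_rep :: "(nat \<Rightarrow> 'z::real_normed_vector) set \<Rightarrow> ((nat \<Rightarrow> 'z) \<Rightarrow> 'y::real_normed_vector) \<Rightarrow> (nat \<Rightarrow> 'z \<Rightarrow> 'y) \<Rightarrow> bool" where
  "conv_rep Zs H \<kappa> \<longleftrightarrow> formal_conv_rep Zs H \<kappa> \<and>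
     (\<forall>z\<in>Zs. summable (\<lambda>n. norm (\<kappa> n (z n))))"

definition minimally_continuous :: "(nat \<Rightarrow> 'z::real_normed_vector) set \<Rightarrow> ((nat \<Rightarrow> 'z) \<Rightarrow> 'y::real_normed_vector) \<Rightarrow> bool" where
  "minimally_continuous Zs H \<longleftrightarrow> (\<forall>t. continuous_on (cball 0 1) (\<lambda>z. H (delta t z)))"

definition minimal_FMP :: "(nat \<Rightarrow> 'z::real_normed_vector) set \<Rightarrow> ((nat \<Rightarrow> 'z) \<Rightarrow> 'y::real_normed_vector) \<Rightarrow> bool" where
  "minimal_FMP Zs H \<longleftrightarrow> (\<forall>z\<in>Zs. (\<lambda>N. H (trunc N z)) \<longlonglongrightarrow> H z)"

definition lp_w_mem :: "ereal \<Rightarrow> (nat \<Rightarrow> real) \<Rightarrow> (nat \<Rightarrow> 'z::real_normed_vector) \<Rightarrow> bool" where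
  "lp_w_mem p w z = (if p = \<infinity> then bounded (range (\<lambda>n. w n * norm (z n)))
                     else summable (\<lambda>n. w n * norm (z n) powr real_of_ereal p))"

definition lp_w_norm :: "ereal \<Rightarrow> (nat \<Rightarrow> real) \<Rightarrow> (nat \<Rightarrow> 'z::real_normed_vector) \<Rightarrow> real" where
  "lp_w_norm p w z = (if p = \<infinity> then (SUP n. w n * norm (z n))
                      else (\<Sum>n. w n * norm (z n) powr real_of_ereal p) powr (1 / real_of_ereal p))"

definition lp_space :: "ereal \<Rightarrow> (nat \<Rightarrow> 'z::real_normed_vector) set" where
  "lp_space p = {z. lp_w_mem p (\<lambda>_. 1) z}"

definition lp_norm :: "ereal \<Rightarrow> (nat \<Rightarrow> 'z::real_normed_vector) \<Rightarrow> real" where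
  "lp_norm p z = lp_w_norm p (\<lambda>_. 1) z"

definition lp_ball :: "ereal \<Rightarrow> (nat \<Rightarrow> 'z::real_normed_vector) set" where
  "lp_ball p = {z \<in> lp_space p. lp_norm p z \<le> 1}"

definition c0_seq :: "(nat \<Rightarrow> 'z::real_normed_vector) set" where
  "c0_seq = {z. (\<lambda>n. norm (z n)) \<longlonglongrightarrow> 0}"

definition weighting_seq :: "(nat \<Rightarrow> real) \<Rightarrow> bool" where
  "weighting_seq w \<longleftrightarrow> (\<forall>n. 0 < w n \<and> w n \<le> 1) \<and> decseq w \<and> w \<longlonglongrightarrow> 0"

definition cont_wrt :: "((nat \<Rightarrow> 'z::real_normed_vector) \<Rightarrow> real) \<Rightarrow> (nat \<Rightarrow> 'z) set \<Rightarrow> ((nat \<Rightarrow> 'z) \<Rightarrow> 'y::real_normed_vector) \<Rightarrow> bool" where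
  "cont_wrt N Zs H \<longleftrightarrow> (\<forall>z\<in>Zs. \<forall>e>0. \<exists>d>0. \<forall>z'\<in>Zs. N (\<lambda>n. z' n - z n) < d \<longrightarrow> dist (H z') (H z) < e)"

definition p_continuous :: "ereal \<Rightarrow> (nat \<Rightarrow> 'z::real_normed_vector) set \<Rightarrow> ((nat \<Rightarrow> 'z) \<Rightarrow> 'y::real_normed_vector) \<Rightarrow> bool" where
  "p_continuous p Zs H \<longleftrightarrow> Zs \<subseteq> lp_space p \<and> cont_wrt (lp_norm p) Zs H"

definition p_weighted_FMP :: "ereal \<Rightarrow> (nat \<Rightarrow> 'z::real_normed_vector) set \<Rightarrow> ((nat \<Rightarrow> 'z) \<Rightarrow> 'y::real_normed_vector) \<Rightarrow> bool" where
  "p_weighted_FMP p Zs H \<longleftrightarrow> Zs \<subseteq> lp_space p \<and>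
     (\<exists>w. weighting_seq w \<and> cont_wrt (lp_w_norm p w) Zs H)"

end

theory Submission
  imports Defs
begin

(*
  A linear H with the minimal FMP that is minimally continuous is the convolution with the kernel
  kappa_n = H o delta^n: the partial sums of the series are values of H on truncations, and since
  H is defined on all restrictions of an admissible sequence, the partial sums over every index set
  stay bounded; in a finite-dimensional Y this forces absolute convergence. Conversely, a kernel
  whose operator norms lie in l^q (bounded for p = 1, summable for p = infinity) gives, by
  Hoelder's inequality, continuity for the l^p norm, and such a kernel can even absorb a weighting
  sequence that decays slowly enough, which yields the weighted FMP. The lower inclusion forces
  the kernel norms into l^q: otherwise an Abel-Dini construction produces a nonnegative a in
  c_0 intersect B^p with sum a_n |kappa_n| = infinity, and evaluating H on a_n u_n, with u_n nearly
  norming kappa_n, contradicts absolute convergence. For p = 1 the weighted FMP makes the kernel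
  norms tend to 0 because |delta^n u|_{1,w} = w_n |u|.
*)

section \<open>Finite-dimensional spaces\<close>

lemma convergent_coeff_of_coeff_bound:
  fixes T :: "'y::real_normed_vector set"
  assumes T: "finite T" and C0: "C \<ge> 0" and C: "\<And>c. (\<Sum>e\<in>T. \<bar>c e\<bar>) \<le> C * norm (\<Sum>e\<in>T. c e *\<^sub>R e)"
    and Cauchy: "Cauchy (\<lambda>j. \<Sum>e\<in>T. c j e *\<^sub>R e)" and e: "e \<in> T"
  shows "convergent (\<lambda>j. c j e)"
proof -
  define x where "x j = (\<Sum>e\<in>T. c j e *\<^sub>R e)" for j
  have Lipschitz: "\<bar>c j e - c k e\<bar> \<le> C * dist (x j) (x k)" for j k
  proof -
    have "\<bar>c j e - c k e\<bar> \<le> (\<Sum>e\<in>T. \<bar>c j e - c k e\<bar>)"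
      using e T by (intro member_le_sum) auto
    also have "\<dots> \<le> C * norm (\<Sum>e\<in>T. (c j e - c k e) *\<^sub>R e)" by (rule C)
    also have "(\<Sum>e\<in>T. (c j e - c k e) *\<^sub>R e) = x j - x k"
      by (simp add: x_def scaleR_diff_left sum_subtractf)
    finally show ?thesis by (simp add: dist_norm)
  qed
  have "Cauchy (\<lambda>j. c j e)"
  proof (rule metric_CauchyI)
    fix \<epsilon> :: real assume "\<epsilon> > 0"
    then have "\<epsilon> / (C + 1) > 0" using C0 by simp
    then obtain M where M: "\<And>j k. M \<le> j \<Longrightarrow> M \<le> k \<Longrightarrow> dist (x j) (x k) < \<epsilon> / (C + 1)"
      using Cauchy unfolding Cauchy_def x_def by blast
    have "dist (c j e) (c k e) < \<epsilon>" if "M \<le> j" "M \<le> k" for j k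
    proof -
      have "C * dist (x j) (x k) \<le> C * (\<epsilon> / (C + 1))"
        using M[OF that] C0 by (intro mult_left_mono) auto
      also have "\<dots> < \<epsilon>" using C0 \<open>\<epsilon> > 0\<close> by (simp add: field_simps)
      finally show ?thesis using Lipschitz[of j k] by (simp add: dist_real_def)
    qed
    then show "\<exists>M. \<forall>j\<ge>M. \<forall>k\<ge>M. dist (c j e) (c k e) < \<epsilon>" by blast
  qed
  then show ?thesis by (simp add: Cauchy_convergent_iff)
qed

lemma closed_span_of_coeff_bound:
  fixes T :: "'y::real_normed_vector set"
  assumes T: "finite T" and C0: "C \<ge> 0" and C: "\<And>c. (\<Sum>e\<in>T. \<bar>c e\<bar>) \<le> C * norm (\<Sum>e\<in>T. c e *\<^sub>R e)"
  shows "closed (span T)"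
proof (rule closed_sequential_limits[THEN iffD2], intro allI impI)
  fix x y assume "(\<forall>j. x j \<in> span T) \<and> x \<longlonglongrightarrow> y"
  then have xT: "\<And>j. x j \<in> span T" and xy: "x \<longlonglongrightarrow> y" by auto
  have "\<forall>j. \<exists>c. x j = (\<Sum>e\<in>T. c e *\<^sub>R e)"
    using xT span_finite[OF T] by (auto simp: image_iff)
  then obtain c where c: "\<And>j. x j = (\<Sum>e\<in>T. c j e *\<^sub>R e)" by metis
  have "Cauchy (\<lambda>j. \<Sum>e\<in>T. c j e *\<^sub>R e)"
    using LIMSEQ_imp_Cauchy[OF xy] by (simp add: c[symmetric])
  then have "\<forall>e\<in>T. convergent (\<lambda>j. c j e)"
    using convergent_coeff_of_coeff_bound[OF T C0 C] by blast
  then obtain l where "\<And>e. e \<in> T \<Longrightarrow> (\<lambda>j. c j e) \<longlonglongrightarrow> l e"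
    unfolding convergent_def by metis
  then have "x \<longlonglongrightarrow> (\<Sum>e\<in>T. l e *\<^sub>R e)"
    unfolding c by (intro tendsto_sum tendsto_scaleR tendsto_const) auto
  then have "y = (\<Sum>e\<in>T. l e *\<^sub>R e)" using xy LIMSEQ_unique by blast
  then show "y \<in> span T" by (simp add: span_sum span_scale span_base)
qed

lemma coeff_bound_insert:
  fixes T :: "'y::real_normed_vector set"
  assumes T: "finite T" and b: "b \<notin> span T"
    and CT0: "CT \<ge> 0" and CT: "\<And>c. (\<Sum>e\<in>T. \<bar>c e\<bar>) \<le> CT * norm (\<Sum>e\<in>T. c e *\<^sub>R e)"
  shows "\<exists>C\<ge>0. \<forall>c. (\<Sum>e\<in>insert b T. \<bar>c e\<bar>) \<le> C * norm (\<Sum>e\<in>insert b T. c e *\<^sub>R e)"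
proof -
  have "b \<notin> T" using b span_base by blast
  define d where "d = infdist b (span T)"
  have d0: "d > 0"
    unfolding d_def using b closed_span_of_coeff_bound[OF T CT0 CT]
    by (intro infdist_pos_not_in_closed) (use span_zero in auto)
  define C where "C = CT * (1 + norm b / d) + 1 / d"
  have "(\<Sum>e\<in>insert b T. \<bar>c e\<bar>) \<le> C * norm (\<Sum>e\<in>insert b T. c e *\<^sub>R e)" for c
  proof -
    define w where "w = (\<Sum>e\<in>T. c e *\<^sub>R e)"
    define y where "y = c b *\<^sub>R b + w"
    have y_eq: "(\<Sum>e\<in>insert b T. c e *\<^sub>R e) = y" using T \<open>b \<notin> T\<close> by (simp add: y_def w_def)
    have cb: "\<bar>c b\<bar> \<le> norm y / d"
    proof (cases "c b = 0")
      case False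
      \<comment> \<open>dividing by \<open>c b\<close>, \<open>y\<close> becomes \<open>b\<close> minus a vector of \<open>span T\<close>\<close>
      have "w \<in> span T" unfolding w_def by (rule span_sum) (rule span_scale, rule span_base)
      then have "- (1 / c b) *\<^sub>R w \<in> span T" by (simp add: span_neg span_scale)
      then have "d \<le> dist b (- (1 / c b) *\<^sub>R w)" unfolding d_def by (rule infdist_le)
      also have "b - - (1 / c b) *\<^sub>R w = (1 / c b) *\<^sub>R y"
        using False by (simp add: y_def algebra_simps)
      then have "dist b (- (1 / c b) *\<^sub>R w) = norm y / \<bar>c b\<bar>"
        by (simp add: dist_norm)
      finally show ?thesis using False d0 by (simp add: field_simps)
    qed (use d0 in \<open>simp add: divide_nonneg_pos\<close>)
    have "norm w \<le> norm y + \<bar>c b\<bar> * norm b"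
      using norm_triangle_ineq4[of y "c b *\<^sub>R b"] by (simp add: y_def)
    also have "\<dots> \<le> norm y + norm y / d * norm b"
      using cb by (intro add_left_mono mult_right_mono) auto
    also have "\<dots> = norm y * (1 + norm b / d)" by (simp add: algebra_simps)
    finally have nw: "norm w \<le> norm y * (1 + norm b / d)" .
    have "(\<Sum>e\<in>insert b T. \<bar>c e\<bar>) = \<bar>c b\<bar> + (\<Sum>e\<in>T. \<bar>c e\<bar>)"
      using T \<open>b \<notin> T\<close> by simp
    also have "\<dots> \<le> norm y / d + CT * (norm y * (1 + norm b / d))"
      using cb CT[of c] mult_left_mono[OF nw CT0] unfolding w_def by linarith
    also have "\<dots> = C * norm y" by (simp add: C_def algebra_simps)
    finally show ?thesis by (simp add: y_eq)
  qed
  moreover have "C \<ge> 0" using CT0 d0 by (simp add: C_def)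
  ultimately show ?thesis by blast
qed

lemma independent_coeff_bound:
  fixes S :: "'y::real_normed_vector set"
  assumes "finite S" "independent S"
  shows "\<exists>C\<ge>0. \<forall>c. (\<Sum>b\<in>S. \<bar>c b\<bar>) \<le> C * norm (\<Sum>b\<in>S. c b *\<^sub>R b)"
  using assms
proof (induction S rule: finite_induct)
  case (insert b T)
  then have "b \<notin> span T" and "independent T" by (auto simp: independent_insert)
  with insert.IH obtain CT where "CT \<ge> 0" "\<And>c. (\<Sum>e\<in>T. \<bar>c e\<bar>) \<le> CT * norm (\<Sum>e\<in>T. c e *\<^sub>R e)"
    by blast
  with insert.hyps(1) \<open>b \<notin> span T\<close> show ?case by (rule coeff_bound_insert)
qed auto

lemma summable_abs_of_bounded_restricted_sums:
  fixes x :: "nat \<Rightarrow> real"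
  assumes M: "\<And>J N. \<bar>\<Sum>n\<le>N. if n \<in> J then x n else 0\<bar> \<le> M J"
  shows "summable (\<lambda>n. \<bar>x n\<bar>)"
proof (rule bounded_imp_summable)
  define P where "P = {n. 0 \<le> x n}"
  fix N
  have "(\<Sum>n\<le>N. \<bar>x n\<bar>) = (\<Sum>n\<le>N. if n \<in> P then x n else 0) - (\<Sum>n\<le>N. if n \<in> - P then x n else 0)"
    by (simp add: sum_subtractf[symmetric]) (intro sum.cong, auto simp: P_def)
  also have "\<dots> \<le> M P + M (- P)"
    using M[of P N] M[of "- P" N] by linarith
  finally show "(\<Sum>n\<le>N. \<bar>x n\<bar>) \<le> M P + M (- P)" .
qed simp

lemma finite_dim_summable_norm_of_bounded_restricted_sums:
  fixes a :: "nat \<Rightarrow> 'y::real_normed_vector"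
  assumes fin: "\<exists>B::'y set. finite B \<and> span B = UNIV"
    and M: "\<And>J N. norm (\<Sum>n\<le>N. if n \<in> J then a n else 0) \<le> M J"
  shows "summable (\<lambda>n. norm (a n))"
proof -
  obtain B :: "'y set" where B: "finite B" "span B = UNIV" using fin by blast
  obtain S where S_B: "S \<subseteq> B" "independent S" "B \<subseteq> span S"
    by (rule maximal_independent_subset)
  have S: "finite S" "independent S" "span S = UNIV"
    using B S_B span_minimal[OF S_B(3) subspace_span] finite_subset by auto
  obtain C where C0: "C \<ge> 0" and C: "\<And>c. (\<Sum>b\<in>S. \<bar>c b\<bar>) \<le> C * norm (\<Sum>b\<in>S. c b *\<^sub>R b)"
    using independent_coeff_bound[OF S(1,2)] by blast
  have "\<forall>n. \<exists>c. a n = (\<Sum>b\<in>S. c b *\<^sub>R b)"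
    using S(3) span_finite[OF S(1)] by (auto simp: image_iff)
  then obtain c where c: "\<And>n. a n = (\<Sum>b\<in>S. c n b *\<^sub>R b)" by metis
  have coordinate_summable: "summable (\<lambda>n. \<bar>c n b\<bar>)" if b: "b \<in> S" for b
  proof (rule summable_abs_of_bounded_restricted_sums)
    fix J N
    define c' where "c' b' = (\<Sum>n\<le>N. if n \<in> J then c n b' else 0)" for b'
    have "(\<Sum>n\<le>N. if n \<in> J then a n else 0) = (\<Sum>n\<le>N. \<Sum>b'\<in>S. (if n \<in> J then c n b' else 0) *\<^sub>R b')"
      by (intro sum.cong) (auto simp: c)
    also have "\<dots> = (\<Sum>b'\<in>S. c' b' *\<^sub>R b')"
      by (subst sum.swap) (simp add: c'_def scaleR_sum_left)
    finally have restricted_sum: "(\<Sum>n\<le>N. if n \<in> J then a n else 0) = (\<Sum>b'\<in>S. c' b' *\<^sub>R b')" .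
    have "\<bar>c' b\<bar> \<le> (\<Sum>b'\<in>S. \<bar>c' b'\<bar>)" using b S(1) by (intro member_le_sum) auto
    also have "\<dots> \<le> C * norm (\<Sum>b'\<in>S. c' b' *\<^sub>R b')" by (rule C)
    also have "\<dots> \<le> C * M J" using M[of J N] C0 by (simp add: restricted_sum[symmetric] mult_left_mono)
    finally show "\<bar>\<Sum>n\<le>N. if n \<in> J then c n b else 0\<bar> \<le> C * M J" by (simp add: c'_def)
  qed
  show ?thesis
  proof (rule summable_comparison_test')
    show "summable (\<lambda>n. \<Sum>b\<in>S. \<bar>c n b\<bar> * norm b)"
      using coordinate_summable by (intro summable_sum summable_mult2) auto
    show "norm (norm (a n)) \<le> (\<Sum>b\<in>S. \<bar>c n b\<bar> * norm b)" for n
      using norm_sum[of "\<lambda>b. c n b *\<^sub>R b" S] by (simp add: c)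
  qed
qed

lemma bounded_linear_of_continuous_on_cball:
  fixes f :: "'a::real_normed_vector \<Rightarrow> 'b::real_normed_vector"
  assumes lin: "linear f" and cont: "continuous_on (cball 0 1) f"
  shows "bounded_linear f"
proof -
  interpret f: linear f by (rule lin)
  have "0 \<in> cball (0::'a) 1" by simp
  then obtain d where d0: "d > 0" and d: "\<And>u. u \<in> cball 0 1 \<Longrightarrow> dist u 0 < d \<Longrightarrow> dist (f u) (f 0) < 1"
    using cont unfolding continuous_on_iff by (meson zero_less_one)
  define e where "e = min d 1 / 2"
  have e: "0 < e" "e < d" "e \<le> 1" using d0 by (auto simp: e_def)
  have "norm (f x) \<le> norm x * (1 / e)" for x
  proof (cases "x = 0")
    case False
    define u where "u = (e / norm x) *\<^sub>R x"
    have "norm u = e" using False e by (simp add: u_def)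
    then have "dist (f u) (f 0) < 1" using d[of u] e by (simp add: dist_norm)
    then have "(e / norm x) * norm (f x) < 1" using e by (simp add: u_def f.scale f.zero dist_norm)
    then show ?thesis using False e by (simp add: field_simps)
  qed (simp add: f.zero)
  then show ?thesis by (intro bounded_linear_intro[where K = "1 / e"] f.add f.scale)
qed

lemma onorm_le_of_unit_ball:
  assumes bl: "bounded_linear f" and e: "e \<ge> 0" and b: "\<And>u. norm u \<le> 1 \<Longrightarrow> norm (f u) \<le> e"
  shows "onorm f \<le> e"
proof (rule onorm_bound[OF e])
  fix x
  show "norm (f x) \<le> e * norm x"
  proof (cases "x = 0")
    case False
    have "norm (f ((1 / norm x) *\<^sub>R x)) \<le> e" using False by (intro b) simp
    then show ?thesis using False by (simp add: linear_simps[OF bl] field_simps)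
  qed (simp add: linear_simps[OF bl])
qed

lemma onorm_le_twice_unit_ball:
  assumes bl: "bounded_linear f"
  obtains u where "norm u \<le> 1" "onorm f \<le> 2 * norm (f u)"
proof (cases "onorm f = 0")
  case True
  then show ?thesis using that[of 0] by simp
next
  case False
  then have "onorm f > 0" using onorm_pos_le[OF bl] by simp
  then have "\<not> (\<forall>u. norm u \<le> 1 \<longrightarrow> norm (f u) \<le> onorm f / 2)"
    using onorm_le_of_unit_ball[OF bl, of "onorm f / 2"] by auto
  then obtain u where "norm u \<le> 1" "onorm f / 2 < norm (f u)" by auto
  then show ?thesis using that[of u] by simp
qed

lemma trunc_eq_restrict_seq: "trunc N z = restrict_seq {..N} z"
  by (auto simp: trunc_def restrict_seq_def)

lemma delta_diff: "(\<lambda>n. delta t u n - delta t v n) = delta t (u - v)"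
  by (auto simp: delta_def)

lemma trunc_eq_sum_delta: "trunc N z = (\<lambda>k. \<Sum>n\<le>N. delta n (z n) k)"
  by (auto simp: trunc_def delta_def fun_eq_iff)

lemma std_assm_delta: "std_assm Zs \<Longrightarrow> norm u \<le> 1 \<Longrightarrow> delta t u \<in> Zs"
  unfolding std_assm_def by blast

lemma std_assm_restrict_seq: "std_assm Zs \<Longrightarrow> z \<in> Zs \<Longrightarrow> restrict_seq J z \<in> Zs"
  unfolding std_assm_def by blast

lemma std_assm_trunc: "std_assm Zs \<Longrightarrow> z \<in> Zs \<Longrightarrow> trunc N z \<in> Zs"
  by (simp add: trunc_eq_restrict_seq std_assm_restrict_seq)

lemma std_assm_zero: "std_assm Zs \<Longrightarrow> (\<lambda>n. 0) \<in> Zs"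
  using std_assm_delta[of Zs 0 0] by (simp add: delta_def)

definition seq_linear :: "((nat \<Rightarrow> 'z::real_normed_vector) \<Rightarrow> 'y::real_normed_vector) \<Rightarrow> bool" where
  "seq_linear L \<longleftrightarrow> (\<forall>x y. L (\<lambda>n. x n + y n) = L x + L y) \<and> (\<forall>c x. L (\<lambda>n. c *\<^sub>R x n) = c *\<^sub>R L x)"

lemma linear_functionalE:
  assumes "linear_functional Zs H"
  obtains L where "seq_linear L" "\<And>z. z \<in> Zs \<Longrightarrow> H z = L z"
  using assms unfolding linear_functional_def seq_linear_def by blast

lemma seq_linear_zero:
  assumes "seq_linear L"
  shows "L (\<lambda>n. 0) = 0"
proof -
  have "\<forall>c x. L (\<lambda>n. c *\<^sub>R x n) = c *\<^sub>R L x" using assms by (simp add: seq_linear_def)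
  from spec[OF spec[OF this, of 0], of "\<lambda>k. 0"] show ?thesis by simp
qed

lemma seq_linear_sum:
  assumes L: "seq_linear L" and "finite I"
  shows "L (\<lambda>k. \<Sum>i\<in>I. f i k) = (\<Sum>i\<in>I. L (f i))"
  using \<open>finite I\<close>
proof (induction I rule: finite_induct)
  case empty
  show ?case using seq_linear_zero[OF L] by simp
next
  case (insert i I)
  then show ?case using L by (simp add: seq_linear_def)
qed

lemma linear_seq_linear_delta:
  fixes L :: "(nat \<Rightarrow> 'z::real_normed_vector) \<Rightarrow> 'y::real_normed_vector"
  assumes L: "seq_linear L"
  shows "linear (\<lambda>u. L (delta n u))"
proof
  fix x y :: 'z and c :: real
  have "delta n (x + y) = (\<lambda>k. delta n x k + delta n y k)"
    and "delta n (c *\<^sub>R x) = (\<lambda>k. c *\<^sub>R delta n x k)"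
    by (auto simp: delta_def)
  then show "L (delta n (x + y)) = L (delta n x) + L (delta n y)"
    and "L (delta n (c *\<^sub>R x)) = c *\<^sub>R L (delta n x)"
    using L unfolding seq_linear_def by metis+
qed

section \<open>Convolution representations\<close>

lemma conv_rep_bounded_linear: "conv_rep Zs H \<kappa> \<Longrightarrow> bounded_linear (\<kappa> n)"
  unfolding conv_rep_def formal_conv_rep_def by blast

lemma conv_rep_tendsto: "conv_rep Zs H \<kappa> \<Longrightarrow> z \<in> Zs \<Longrightarrow> (\<lambda>T. \<Sum>n\<le>T. \<kappa> n (z n)) \<longlonglongrightarrow> H z"
  unfolding conv_rep_def formal_conv_rep_def by blast

lemma conv_rep_summable: "conv_rep Zs H \<kappa> \<Longrightarrow> z \<in> Zs \<Longrightarrow> summable (\<lambda>n. norm (\<kappa> n (z n)))"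
  unfolding conv_rep_def by blast

lemma conv_rep_finite_support:
  assumes cr: "conv_rep Zs H \<kappa>" and x: "x \<in> Zs" and F: "finite F" and supp: "\<And>n. n \<notin> F \<Longrightarrow> x n = 0"
  shows "H x = (\<Sum>n\<in>F. \<kappa> n (x n))"
proof -
  have "(\<lambda>T. \<Sum>n\<le>T. \<kappa> n (x n)) \<longlonglongrightarrow> (\<Sum>n\<in>F. \<kappa> n (x n))"
  proof (rule tendsto_eventually, rule eventually_sequentiallyI)
    fix T assume "Max (insert 0 F) \<le> T"
    then have "F \<subseteq> {..T}" using F by (auto simp: Max_le_iff)
    then show "(\<Sum>n\<le>T. \<kappa> n (x n)) = (\<Sum>n\<in>F. \<kappa> n (x n))"
      using F supp linear_simps(3)[OF conv_rep_bounded_linear[OF cr]]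
      by (intro sum.mono_neutral_right) auto
  qed
  then show ?thesis using conv_rep_tendsto[OF cr x] LIMSEQ_unique by blast
qed

lemma conv_rep_trunc:
  assumes "std_assm Zs" "conv_rep Zs H \<kappa>" "z \<in> Zs"
  shows "H (trunc N z) = (\<Sum>n\<le>N. \<kappa> n (z n))"
  using conv_rep_finite_support[OF assms(2) std_assm_trunc[OF assms(1,3)], of "{..N}"]
  by (simp add: trunc_def)

lemma conv_rep_delta:
  assumes "std_assm Zs" "conv_rep Zs H \<kappa>" "norm u \<le> 1"
  shows "H (delta t u) = \<kappa> t u"
  using conv_rep_finite_support[OF assms(2) std_assm_delta[OF assms(1,3)], of "{t}"]
  by (simp add: delta_def)

lemma conv_rep_imp_minimal:
  assumes std: "std_assm Zs" and cr: "conv_rep Zs H \<kappa>"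
  shows "minimal_FMP Zs H \<and> minimally_continuous Zs H"
proof
  show "minimal_FMP Zs H"
    unfolding minimal_FMP_def using conv_rep_trunc[OF std cr] conv_rep_tendsto[OF cr] by simp
  have "continuous_on (cball 0 1) (\<lambda>u. H (delta t u))" for t
  proof (rule continuous_on_eq)
    show "continuous_on (cball 0 1) (\<kappa> t)"
      by (rule linear_continuous_on[OF conv_rep_bounded_linear[OF cr]])
  qed (simp add: conv_rep_delta[OF std cr])
  then show "minimally_continuous Zs H" by (simp add: minimally_continuous_def)
qed

lemma minimal_imp_formal_conv_rep:
  assumes std: "std_assm Zs" and L: "seq_linear L" and HL: "\<And>z. z \<in> Zs \<Longrightarrow> H z = L z"
    and mf: "minimal_FMP Zs H" and mc: "minimally_continuous Zs H"
  shows "formal_conv_rep Zs H (\<lambda>n u. L (delta n u))"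
proof -
  have "bounded_linear (\<lambda>u. L (delta n u))" for n
  proof (rule bounded_linear_of_continuous_on_cball[OF linear_seq_linear_delta[OF L]])
    have "continuous_on (cball 0 1) (\<lambda>u. H (delta n u))"
      using mc by (simp add: minimally_continuous_def)
    then show "continuous_on (cball 0 1) (\<lambda>u. L (delta n u))"
      by (rule continuous_on_eq) (simp add: HL std_assm_delta[OF std])
  qed
  moreover have "(\<lambda>T. \<Sum>n\<le>T. L (delta n (z n))) \<longlonglongrightarrow> H z" if z: "z \<in> Zs" for z
  proof -
    have "L (trunc T z) = (\<Sum>n\<le>T. L (delta n (z n)))" for T
      unfolding trunc_eq_sum_delta by (rule seq_linear_sum[OF L]) simp
    moreover have "(\<lambda>T. H (trunc T z)) \<longlonglongrightarrow> H z" using mf z by (simp add: minimal_FMP_def)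
    ultimately show ?thesis by (simp add: HL[OF std_assm_trunc[OF std z]])
  qed
  ultimately show ?thesis by (simp add: formal_conv_rep_def)
qed

lemma formal_conv_rep_imp_conv_rep:
  fixes \<kappa> :: "nat \<Rightarrow> 'z::real_normed_vector \<Rightarrow> 'y::real_normed_vector"
  assumes std: "std_assm Zs" and fin: "\<exists>B::'y set. finite B \<and> span B = UNIV"
    and fcr: "formal_conv_rep Zs H \<kappa>"
  shows "conv_rep Zs H \<kappa>"
proof -
  have bl: "bounded_linear (\<kappa> n)" for n using fcr by (simp add: formal_conv_rep_def)
  have "summable (\<lambda>n. norm (\<kappa> n (z n)))" if z: "z \<in> Zs" for z
  proof -
    have "\<forall>J. \<exists>M. \<forall>N. norm (\<Sum>n\<le>N. if n \<in> J then \<kappa> n (z n) else 0) \<le> M"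
    proof
      fix J
      have "(\<lambda>N. \<Sum>n\<le>N. \<kappa> n (restrict_seq J z n)) \<longlonglongrightarrow> H (restrict_seq J z)"
        using fcr std_assm_restrict_seq[OF std z] by (simp add: formal_conv_rep_def)
      then have "Bseq (\<lambda>N. \<Sum>n\<le>N. \<kappa> n (restrict_seq J z n))"
        by (rule convergent_imp_Bseq[OF convergentI])
      then obtain M where "\<And>N. norm (\<Sum>n\<le>N. \<kappa> n (restrict_seq J z n)) \<le> M"
        unfolding Bseq_def by blast
      moreover have "\<kappa> n (restrict_seq J z n) = (if n \<in> J then \<kappa> n (z n) else 0)" for n
        using linear_simps(3)[OF bl] by (simp add: restrict_seq_def)
      ultimately show "\<exists>M. \<forall>N. norm (\<Sum>n\<le>N. if n \<in> J then \<kappa> n (z n) else 0) \<le> M"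
        by auto
    qed
    then obtain M where "\<And>J N. norm (\<Sum>n\<le>N. if n \<in> J then \<kappa> n (z n) else 0) \<le> M J"
      by metis
    then show ?thesis by (rule finite_dim_summable_norm_of_bounded_restricted_sums[OF fin])
  qed
  then show ?thesis using fcr by (simp add: conv_rep_def)
qed

lemma conv_rep_iff_minimal:
  fixes H :: "(nat \<Rightarrow> 'z::real_normed_vector) \<Rightarrow> 'y::real_normed_vector"
  assumes "std_assm Zs" "\<exists>B::'y set. finite B \<and> span B = UNIV" "linear_functional Zs H"
  shows "(\<exists>\<kappa>. conv_rep Zs H \<kappa>) \<longleftrightarrow> minimal_FMP Zs H \<and> minimally_continuous Zs H"
proof -
  obtain L where "seq_linear L" "\<And>z. z \<in> Zs \<Longrightarrow> H z = L z"
    using linear_functionalE[OF assms(3)] by blast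
  then show ?thesis
    using conv_rep_imp_minimal[OF assms(1)] minimal_imp_formal_conv_rep[OF assms(1)]
      formal_conv_rep_imp_conv_rep[OF assms(1,2)] by blast
qed

lemma lp_w_norm_trunc_tendsto_ereal:
  assumes r: "r > 0" and w: "\<And>n. 0 \<le> w n \<and> w n \<le> 1" and z: "z \<in> lp_space (ereal r)"
  shows "(\<lambda>T. lp_w_norm (ereal r) w (\<lambda>n. trunc T z n - z n)) \<longlonglongrightarrow> 0"
proof -
  define g where "g n = w n * norm (z n) powr r" for n
  have g: "summable g"
  proof (rule summable_comparison_test')
    show "summable (\<lambda>n. norm (z n) powr r)" using z by (simp add: lp_space_def lp_w_mem_def)
    show "norm (g n) \<le> norm (z n) powr r" for n
      using w[of n] by (simp add: g_def mult_left_le_one_le)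
  qed
  have tail: "(\<Sum>n. w n * norm (trunc T z n - z n) powr r) = (\<Sum>k. g (k + Suc T))" for T
  proof -
    define h where "h n = (if n \<le> T then 0 else g n)" for n
    have "summable h"
      by (rule summable_comparison_test'[OF g]) (use w in \<open>auto simp: g_def h_def\<close>)
    have "(\<lambda>n. w n * norm (trunc T z n - z n) powr r) = h"
      using r by (auto simp: trunc_def g_def h_def)
    then have "(\<Sum>n. w n * norm (trunc T z n - z n) powr r) = suminf h" by simp
    also have "\<dots> = (\<Sum>k. h (k + Suc T)) + (\<Sum>i<Suc T. h i)"
      by (rule suminf_split_initial_segment[OF \<open>summable h\<close>])
    also have "\<dots> = (\<Sum>k. g (k + Suc T))" by (simp add: h_def)
    finally show ?thesis .
  qed
  have "(\<lambda>T. (\<Sum>k. g (k + Suc T)) powr (1 / r)) \<longlonglongrightarrow> 0"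
  proof (rule tendsto_zero_powrI[where b = "1 / r"])
    show "(\<lambda>T. \<Sum>k. g (k + Suc T)) \<longlonglongrightarrow> 0"
      using LIMSEQ_Suc[OF suminf_exist_split2[OF g]] by simp
    have "summable (\<lambda>k. g (k + Suc T))" for T by (rule summable_ignore_initial_segment[OF g])
    then show "\<forall>\<^sub>F T in sequentially. 0 \<le> (\<Sum>k. g (k + Suc T))"
      using w by (intro always_eventually allI suminf_nonneg) (auto simp: g_def)
  qed (use r in auto)
  then show ?thesis by (simp add: lp_w_norm_def tail)
qed

lemma lp_w_norm_trunc_tendsto_infinity:
  assumes w: "\<And>n. 0 \<le> w n" and lim: "(\<lambda>n. w n * norm (z n)) \<longlonglongrightarrow> 0"
  shows "(\<lambda>T. lp_w_norm \<infinity> w (\<lambda>n. trunc T z n - z n)) \<longlonglongrightarrow> 0"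
proof (rule LIMSEQ_I)
  fix e :: real assume e: "e > 0"
  obtain M where M: "\<And>n. n \<ge> M \<Longrightarrow> w n * norm (z n) < e / 2"
    using LIMSEQ_D[OF lim, of "e / 2"] e w by (auto simp: abs_mult)
  have "norm (lp_w_norm \<infinity> w (\<lambda>n. trunc T z n - z n)) < e" if T: "M \<le> T" for T
  proof -
    have bound: "w n * norm (trunc T z n - z n) \<le> e / 2" for n
      using M[of n] T e by (auto simp: trunc_def)
    have "0 \<le> w 0 * norm (trunc T z 0 - z 0)" using w by simp
    also have "\<dots> \<le> (SUP n. w n * norm (trunc T z n - z n))"
      by (rule cSUP_upper) (use bound in \<open>auto intro!: bdd_aboveI2[where M = "e / 2"]\<close>)
    finally have "0 \<le> (SUP n. w n * norm (trunc T z n - z n))" .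
    moreover have "(SUP n. w n * norm (trunc T z n - z n)) \<le> e / 2"
      by (rule cSUP_least) (use bound in auto)
    ultimately show ?thesis using e by (simp add: lp_w_norm_def)
  qed
  then show "\<exists>M. \<forall>T\<ge>M. norm (lp_w_norm \<infinity> w (\<lambda>n. trunc T z n - z n) - 0) < e" by auto
qed

lemma lp_w_norm_infinity_ge:
  assumes z: "bounded (range (\<lambda>n. norm (z n)))" and w: "\<And>n. 0 \<le> w n \<and> w n \<le> 1"
  shows "w n * norm (z n) \<le> lp_w_norm \<infinity> w z"
proof -
  obtain B where B: "\<And>k. norm (z k) \<le> B" using z unfolding bounded_iff by auto
  have bound: "w k * norm (z k) \<le> B" for k
  proof -
    have "w k * norm (z k) \<le> norm (z k)" using w[of k] by (simp add: mult_left_le_one_le)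
    then show ?thesis using B[of k] by linarith
  qed
  have "w n * norm (z n) \<le> (SUP k. w k * norm (z k))"
    by (rule cSUP_upper) (use bound in \<open>auto intro!: bdd_aboveI2[where M = B]\<close>)
  then show ?thesis by (simp add: lp_w_norm_def)
qed

lemma lp_w_norm_delta_ereal:
  assumes "r > 0"
  shows "lp_w_norm (ereal r) w (delta t u) = (w t * norm u powr r) powr (1 / r)"
proof -
  have "(\<Sum>n. w n * norm (delta t u n) powr r) = (\<Sum>n\<in>{t}. w n * norm (delta t u n) powr r)"
    using assms by (intro suminf_finite) (auto simp: delta_def)
  then show ?thesis by (simp add: lp_w_norm_def delta_def)
qed

lemma lp_w_norm_delta_le:
  assumes p: "0 < p" and w: "\<And>n. 0 \<le> w n \<and> w n \<le> 1"
  shows "lp_w_norm p w (delta t u) \<le> norm u"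
proof (cases p)
  case (real r)
  with p have r: "r > 0" by simp
  have "(w t * norm u powr r) powr (1 / r) \<le> (norm u powr r) powr (1 / r)"
    using w[of t] r by (intro powr_mono2) (auto simp: mult_left_le_one_le)
  then show ?thesis using r by (simp add: real lp_w_norm_delta_ereal powr_powr)
next
  case PInf
  have "w n * norm (delta t u n) \<le> norm u" for n
    using w[of n] by (auto simp: delta_def mult_left_le_one_le)
  then show ?thesis by (simp add: PInf lp_w_norm_def cSUP_least)
qed (use p in simp)

lemma lp_ball_ereal_iff:
  assumes "r > 0"
  shows "z \<in> lp_ball (ereal r) \<longleftrightarrow>
    summable (\<lambda>n. norm (z n) powr r) \<and> (\<Sum>n. norm (z n) powr r) \<le> 1"
proof -
  have "(S powr (1 / r) \<le> 1) \<longleftrightarrow> S \<le> 1" if "S \<ge> 0" for S :: real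
  proof
    assume "S powr (1 / r) \<le> 1"
    then have "(S powr (1 / r)) powr r \<le> 1" using assms by (intro powr_le1) auto
    then show "S \<le> 1" using that assms by (simp add: powr_powr)
  qed (use that assms in \<open>auto intro: powr_le1\<close>)
  moreover have "summable (\<lambda>n. norm (z n) powr r) \<Longrightarrow> 0 \<le> (\<Sum>n. norm (z n) powr r)"
    by (intro suminf_nonneg) auto
  ultimately show ?thesis
    by (auto simp: lp_ball_def lp_space_def lp_norm_def lp_w_mem_def lp_w_norm_def)
qed

lemma lp_ball_infinity_iff: "z \<in> lp_ball \<infinity> \<longleftrightarrow> (\<forall>n. norm (z n) \<le> 1)"
proof
  assume "z \<in> lp_ball \<infinity>"
  then have b: "bounded (range (\<lambda>n. norm (z n)))" and s: "(SUP n. norm (z n)) \<le> 1"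
    by (auto simp: lp_ball_def lp_space_def lp_norm_def lp_w_mem_def lp_w_norm_def)
  show "\<forall>n. norm (z n) \<le> 1"
  proof
    fix n
    have "norm (z n) \<le> (SUP n. norm (z n))"
      using b by (intro cSUP_upper bounded_imp_bdd_above) auto
    then show "norm (z n) \<le> 1" using s by linarith
  qed
next
  assume z: "\<forall>n. norm (z n) \<le> 1"
  then have "bounded (range (\<lambda>n. norm (z n)))" unfolding bounded_iff by auto
  moreover have "(SUP n. norm (z n)) \<le> 1" using z by (intro cSUP_least) auto
  ultimately show "z \<in> lp_ball \<infinity>"
    by (simp add: lp_ball_def lp_space_def lp_norm_def lp_w_mem_def lp_w_norm_def)
qed

lemma lp_ball_mono:
  assumes p: "0 < p" and a: "a \<in> lp_ball p" and za: "\<And>n. norm (z n) \<le> norm (a n)"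
  shows "z \<in> lp_ball p"
proof (cases p)
  case (real r)
  with p have r: "r > 0" by simp
  have le: "norm (z n) powr r \<le> norm (a n) powr r" for n using za r by (intro powr_mono2) auto
  have sa: "summable (\<lambda>n. norm (a n) powr r)" and a1: "(\<Sum>n. norm (a n) powr r) \<le> 1"
    using a by (simp_all add: real lp_ball_ereal_iff[OF r])
  have sz: "summable (\<lambda>n. norm (z n) powr r)"
    by (rule summable_comparison_test'[OF sa]) (use le in simp)
  have "(\<Sum>n. norm (z n) powr r) \<le> (\<Sum>n. norm (a n) powr r)" by (rule suminf_le[OF le sz sa])
  then show ?thesis using sz a1 by (simp add: real lp_ball_ereal_iff[OF r])
next
  case PInf
  have "norm (z n) \<le> 1" for n
    using order_trans[OF za[of n]] a by (simp add: PInf lp_ball_infinity_iff)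
  then show ?thesis by (simp add: PInf lp_ball_infinity_iff)
qed (use p in simp)

lemma c0_seq_mono:
  assumes "a \<in> c0_seq" "\<And>n. norm (z n) \<le> norm (a n)"
  shows "z \<in> c0_seq"
proof -
  have "(\<lambda>n. norm (a n)) \<longlonglongrightarrow> 0" using assms(1) by (simp add: c0_seq_def)
  then have "(\<lambda>n. norm (z n)) \<longlonglongrightarrow> 0"
    by (rule Lim_null_comparison[rotated]) (use assms(2) in auto)
  then show ?thesis by (simp add: c0_seq_def)
qed

lemma lp_ball_ereal_imp_c0_seq:
  assumes r: "r > 0" and z: "z \<in> lp_ball (ereal r)"
  shows "z \<in> c0_seq"
proof -
  have "(\<lambda>n. norm (z n) powr r) \<longlonglongrightarrow> 0"
    using z r by (intro summable_LIMSEQ_zero) (simp add: lp_ball_ereal_iff)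
  then have "(\<lambda>n. (norm (z n) powr r) powr (1 / r)) \<longlonglongrightarrow> 0"
    by (rule tendsto_zero_powrI[where b = "1 / r"]) (use r in auto)
  then show ?thesis using r by (simp add: c0_seq_def powr_powr)
qed

lemma exists_scaled_in_lp_ball:
  fixes b :: "nat \<Rightarrow> real"
  assumes r: "r > 0" and b: "summable (\<lambda>n. norm (b n) powr r)"
  obtains l where "l > 0" "(\<lambda>n. b n / l) \<in> lp_ball (ereal r)"
proof -
  define A where "A = (\<Sum>n. norm (b n) powr r)"
  have A: "A \<ge> 0" unfolding A_def by (intro suminf_nonneg b) simp
  define l where "l = (A + 1) powr (1 / r)"
  have l: "l > 0" "l powr r = A + 1" using A r by (simp_all add: l_def powr_powr)
  have scaled: "norm (b n / l) powr r = norm (b n) powr r / (A + 1)" for n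
    using l by (simp add: powr_divide)
  have "summable (\<lambda>n. norm (b n / l) powr r)" unfolding scaled using b by simp
  moreover have "(\<Sum>n. norm (b n / l) powr r) = A / (A + 1)"
    unfolding scaled A_def by (rule suminf_divide[OF b])
  ultimately have "(\<lambda>n. b n / l) \<in> lp_ball (ereal r)" using A r by (simp add: lp_ball_ereal_iff)
  with l(1) show ?thesis by (rule that)
qed

lemma powr_add_le:
  fixes a b r :: real
  assumes "a \<ge> 0" "b \<ge> 0" "r > 0"
  shows "(a + b) powr r \<le> 2 powr r * (a powr r + b powr r)"
proof -
  have "(a + b) powr r \<le> (2 * max a b) powr r" using assms by (intro powr_mono2) auto
  also have "\<dots> = 2 powr r * max a b powr r" using assms by (simp add: powr_mult)
  also have "max a b powr r \<le> a powr r + b powr r" by (cases "a \<le> b") (auto simp: max_def)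
  then have "2 powr r * max a b powr r \<le> 2 powr r * (a powr r + b powr r)" by simp
  finally show ?thesis .
qed

lemma lp_space_diff_summable:
  assumes r: "r > 0" and z: "z \<in> lp_space (ereal r)" and z': "z' \<in> lp_space (ereal r)"
  shows "summable (\<lambda>n. norm (z' n - z n) powr r)"
proof (rule summable_comparison_test')
  show "summable (\<lambda>n. 2 powr r * (norm (z' n) powr r + norm (z n) powr r))"
    using z z' by (intro summable_mult summable_add) (auto simp: lp_space_def lp_w_mem_def)
  have "norm (z' n - z n) powr r \<le> (norm (z' n) + norm (z n)) powr r" for n
    using r by (intro powr_mono2 norm_triangle_ineq4) auto
  also have "(norm (z' n) + norm (z n)) powr r \<le> 2 powr r * (norm (z' n) powr r + norm (z n) powr r)" for n
    using r by (intro powr_add_le) auto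
  finally show "norm (norm (z' n - z n) powr r) \<le> 2 powr r * (norm (z' n) powr r + norm (z n) powr r)" for n
    by simp
qed

lemma cont_wrt_lp_norm: "cont_wrt (lp_norm p) Zs H \<longleftrightarrow> cont_wrt (lp_w_norm p (\<lambda>_. 1)) Zs H"
  by (simp add: lp_norm_def[abs_def])

section \<open>Weighting sequences\<close>

lemma weighting_seq_bounds: "weighting_seq w \<Longrightarrow> 0 < w n \<and> w n \<le> 1"
  unfolding weighting_seq_def by blast

lemma weighting_seq_mult_bounded_tendsto:
  assumes w: "weighting_seq w" and B: "\<And>n. norm (z n) \<le> B"
  shows "(\<lambda>n. w n * norm (z n)) \<longlonglongrightarrow> 0"
proof (rule Lim_null_comparison)
  have "norm (w n * norm (z n)) \<le> w n * B" for n
    using weighting_seq_bounds[OF w, of n] B[of n] by (simp add: abs_of_pos mult_left_mono)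
  then show "\<forall>\<^sub>F n in sequentially. norm (w n * norm (z n)) \<le> w n * B" by simp
  show "(\<lambda>n. w n * B) \<longlonglongrightarrow> 0"
    using w by (intro tendsto_mult_left_zero) (simp add: weighting_seq_def)
qed

lemma exists_tail_majorant:
  fixes a :: "nat \<Rightarrow> real"
  assumes a: "\<And>n. 0 \<le> a n" and sa: "summable a"
  obtains R where "\<And>n. R n > 0" "decseq R" "R \<longlonglongrightarrow> 0" "\<And>n. a n \<le> R n - R (Suc n)"
proof
  define R where "R n = (\<Sum>k. a (k + n)) + (1/2) ^ n" for n
  have tail: "(\<Sum>k. a (k + n)) = suminf a - (\<Sum>k<n. a k)" for n
    using suminf_split_initial_segment[OF sa, of n] by simp
  have "R n - R (Suc n) = a n + (1/2) ^ Suc n" for n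
    using tail[of n] tail[of "Suc n"] by (simp add: R_def)
  then show R_diff: "a n \<le> R n - R (Suc n)" for n by simp
  show "R n > 0" for n
    unfolding R_def using a summable_ignore_initial_segment[OF sa, of n]
    by (intro add_nonneg_pos suminf_nonneg) auto
  show "decseq R"
  proof (rule decseq_SucI)
    show "R (Suc n) \<le> R n" for n using R_diff[of n] a[of n] by linarith
  qed
  have "(\<lambda>n. (\<Sum>k. a (k + n)) + (1/2::real) ^ n) \<longlonglongrightarrow> 0 + 0"
    by (intro tendsto_add suminf_exist_split2 sa LIMSEQ_power_zero) simp
  then show "R \<longlonglongrightarrow> 0" by (simp add: R_def[abs_def])
qed

lemma summable_div_sqrt_of_telescoping:
  fixes a R :: "nat \<Rightarrow> real"
  assumes R: "\<And>n. R n > 0" "decseq R" and a: "\<And>n. 0 \<le> a n" "\<And>n. a n \<le> R n - R (Suc n)"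
  shows "summable (\<lambda>n. a n / sqrt (R n))"
proof (rule summableI_nonneg_bounded)
  define s where "s n = sqrt (R n)" for n
  have s: "s n > 0" "s (Suc n) \<le> s n" for n
    using R decseq_SucD[OF R(2)] by (auto simp: s_def)
  have step: "a n / s n \<le> 2 * (s n - s (Suc n))" for n
  proof -
    have "a n \<le> (s n - s (Suc n)) * (s n + s (Suc n))"
      using a(2)[of n] R(1)[of n] R(1)[of "Suc n"] by (simp add: s_def algebra_simps)
    also have "\<dots> \<le> (s n - s (Suc n)) * (2 * s n)"
      using s[of n] by (intro mult_left_mono) auto
    finally show ?thesis using s(1)[of n] by (simp add: field_simps)
  qed
  fix N
  have "(\<Sum>n<N. a n / sqrt (R n)) \<le> (\<Sum>n<N. 2 * (s n - s (Suc n)))"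
    by (intro sum_mono) (use step in \<open>simp add: s_def\<close>)
  also have "\<dots> = 2 * (\<Sum>n<N. s n - s (Suc n))" by (rule sum_distrib_left[symmetric])
  also have "\<dots> = 2 * (s 0 - s N)" by (simp only: sum_lessThan_telescope')
  also have "\<dots> \<le> 2 * s 0" using s(1)[of N] by simp
  finally show "(\<Sum>n<N. a n / sqrt (R n)) \<le> 2 * s 0" .
qed (intro divide_nonneg_nonneg a(1) real_sqrt_ge_zero less_imp_le[OF R(1)])

lemma weighting_seq_summable_powr:
  fixes a :: "nat \<Rightarrow> real"
  assumes a: "\<And>n. 0 \<le> a n" and sa: "summable a" and t: "t > 0"
  obtains w where "weighting_seq w" "summable (\<lambda>n. a n * w n powr (- t))"
proof -
  obtain R where R: "\<And>n. R n > 0" "decseq R" "R \<longlonglongrightarrow> 0" "\<And>n. a n \<le> R n - R (Suc n)"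
    using exists_tail_majorant[OF a sa] by blast
  \<comment> \<open>chosen so that \<open>w n powr (- t) = sqrt (R 0 / R n)\<close>\<close>
  define w where "w n = (R n / R 0) powr (1 / (2 * t))" for n
  have R_le: "R n \<le> R m" if "m \<le> n" for m n using R(2) that by (simp add: decseq_def)
  have "weighting_seq w" unfolding weighting_seq_def
  proof (intro conjI allI)
    show "0 < w n" for n using R(1)[of n] R(1)[of 0] by (simp add: w_def)
    show "w n \<le> 1" for n
      using R_le[of 0 n] R(1)[of n] R(1)[of 0] t by (simp add: w_def powr_le1)
    show "decseq w" unfolding decseq_def
    proof (intro allI impI)
      fix m n :: nat assume "m \<le> n"
      then have "R n / R 0 \<le> R m / R 0" using R_le R(1)[of 0] by (simp add: divide_right_mono)
      then show "w n \<le> w m" unfolding w_def using R(1)[of n] R(1)[of 0] t by (intro powr_mono2) auto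
    qed
    have "(\<lambda>n. R n / R 0) \<longlonglongrightarrow> 0 / R 0" by (intro tendsto_divide R(3) tendsto_const) (use R(1)[of 0] in auto)
    then show "w \<longlonglongrightarrow> 0" unfolding w_def[abs_def]
      by (intro tendsto_zero_powrI[where b = "1 / (2 * t)"]) (use R(1) t in \<open>auto simp: less_imp_le\<close>)
  qed
  moreover have eq: "a n * w n powr (- t) = sqrt (R 0) * (a n / sqrt (R n))" for n
  proof -
    have "w n powr (- t) = inverse ((R n / R 0) powr (1/2))"
      using t by (simp add: w_def powr_powr powr_minus)
    also have "\<dots> = sqrt (R 0) / sqrt (R n)"
      using R(1)[of n] R(1)[of 0] by (simp add: powr_half_sqrt real_sqrt_divide)
    finally show ?thesis by simp
  qed
  moreover have "summable (\<lambda>n. a n * w n powr (- t))"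
    unfolding eq by (intro summable_mult summable_div_sqrt_of_telescoping[OF R(1,2) a R(4)])
  ultimately show ?thesis using that by blast
qed

lemma exists_decseq_majorant:
  fixes c :: "nat \<Rightarrow> real"
  assumes c: "\<And>n. 0 \<le> c n" and lim: "c \<longlonglongrightarrow> 0"
  obtains m where "decseq m" "m \<longlonglongrightarrow> 0" "\<And>n. c n \<le> m n"
proof
  obtain B where B: "\<And>n. c n \<le> B"
    using convergent_imp_Bseq[OF convergentI[OF lim]] unfolding Bseq_def
    by (metis real_norm_def abs_le_D1)
  define m where "m n = (SUP k. c (k + n))" for n
  have bdd: "bdd_above (range (\<lambda>k. c (k + n)))" for n using B by (intro bdd_aboveI2)
  show "c n \<le> m n" for n
    using cSUP_upper[OF UNIV_I bdd[of n], of 0] by (simp add: m_def)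
  show "decseq m"
  proof (rule decseq_SucI)
    fix n
    show "m (Suc n) \<le> m n" unfolding m_def
    proof (rule cSUP_least)
      fix k
      show "c (k + Suc n) \<le> (SUP k. c (k + n))"
        using cSUP_upper[OF UNIV_I bdd[of n], of "Suc k"] by simp
    qed simp
  qed
  show "m \<longlonglongrightarrow> 0"
  proof (rule LIMSEQ_I)
    fix e :: real assume e: "e > 0"
    obtain N where N: "\<And>n. n \<ge> N \<Longrightarrow> norm (c n - 0) < e / 2"
      using LIMSEQ_D[OF lim, of "e / 2"] e by auto
    have "norm (m n - 0) < e" if "n \<ge> N" for n
    proof -
      have "c (k + n) \<le> e / 2" for k using N[of "k + n"] that by simp
      then have "m n \<le> e / 2" unfolding m_def by (intro cSUP_least) auto
      moreover have "0 \<le> m n" using c[of n] cSUP_upper[OF UNIV_I bdd[of n], of 0] by (simp add: m_def)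
      ultimately show ?thesis using e by simp
    qed
    then show "\<exists>N. \<forall>n\<ge>N. norm (m n - 0) < e" by blast
  qed
qed

lemma weighting_seq_dominating:
  fixes c :: "nat \<Rightarrow> real"
  assumes c: "\<And>n. 0 \<le> c n" and lim: "c \<longlonglongrightarrow> 0"
  obtains w K where "weighting_seq w" "K \<ge> 0" "\<And>n. c n \<le> K * w n"
proof -
  obtain m where m: "decseq m" "m \<longlonglongrightarrow> 0" "\<And>n. c n \<le> m n"
    using exists_decseq_majorant[OF c lim] by blast
  have m0: "0 \<le> m n" for n using c[of n] m(3)[of n] by simp
  have m_le: "m n \<le> m k" if "k \<le> n" for k n using m(1) that by (simp add: decseq_def)
  \<comment> \<open>the summand \<open>1 / (n + 1)\<close> keeps the weights positive\<close>
  define w where "w n = (m n + 1 / (real n + 1)) / (m 0 + 1)" for n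
  have "weighting_seq w" unfolding weighting_seq_def
  proof (intro conjI allI)
    show "0 < w n" for n using m0[of n] m0[of 0] by (simp add: w_def add_nonneg_pos)
    show "w n \<le> 1" for n
      using m_le[of 0 n] m0[of 0] by (simp add: w_def divide_le_eq_1 add_mono)
    show "decseq w" unfolding decseq_def
    proof (intro allI impI)
      fix k n :: nat assume "k \<le> n"
      then have "m n + 1 / (real n + 1) \<le> m k + 1 / (real k + 1)"
        using m_le by (intro add_mono) (auto simp: frac_le)
      then show "w n \<le> w k" unfolding w_def using m0[of 0] by (simp add: divide_right_mono)
    qed
    have "(\<lambda>n. 1 / (real n + 1)) \<longlonglongrightarrow> 0"
      using LIMSEQ_inverse_real_of_nat by (simp add: inverse_eq_divide add.commute)
    then have "(\<lambda>n. (m n + 1 / (real n + 1)) / (m 0 + 1)) \<longlonglongrightarrow> (0 + 0) / (m 0 + 1)"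
      by (intro tendsto_divide tendsto_add m(2) tendsto_const) (use m0[of 0] in auto)
    then show "w \<longlonglongrightarrow> 0" by (simp add: w_def[abs_def])
  qed
  moreover have "c n \<le> (m 0 + 1) * w n" for n
    using m(3)[of n] m0[of 0] by (simp add: w_def add_increasing2)
  ultimately show ?thesis using m0[of 0] by (intro that[of w "m 0 + 1"]) auto
qed

section \<open>Continuity of convolutions\<close>

lemma Youngs_inequality_scaled:
  fixes a b \<alpha> \<beta> p q :: real
  assumes pq: "p > 1" "q > 1" "1 / p + 1 / q = 1" and ab: "a \<ge> 0" "b \<ge> 0" and \<alpha>\<beta>: "\<alpha> > 0" "\<beta> > 0"
  shows "a * b \<le> \<alpha> * \<beta> * (a powr p / (\<alpha> powr p * p) + b powr q / (\<beta> powr q * q))"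
proof -
  have "(a / \<alpha>) * (b / \<beta>) \<le> (a / \<alpha>) powr p / p + (b / \<beta>) powr q / q"
    using pq ab \<alpha>\<beta> by (intro Youngs_inequality) auto
  also have "\<dots> = a powr p / (\<alpha> powr p * p) + b powr q / (\<beta> powr q * q)"
    using ab \<alpha>\<beta> by (simp add: powr_divide)
  finally show ?thesis using \<alpha>\<beta> by (simp add: field_simps)
qed

lemma Holder_inequality_series:
  fixes x y :: "nat \<Rightarrow> real"
  assumes pq: "p > 1" "q > 1" "1 / p + 1 / q = 1"
    and x0: "\<And>n. x n \<ge> 0" and y0: "\<And>n. y n \<ge> 0"
    and sx: "summable (\<lambda>n. x n powr p)" and sy: "summable (\<lambda>n. y n powr q)"
  shows "summable (\<lambda>n. x n * y n)"
    and "(\<Sum>n. x n * y n) \<le> (\<Sum>n. x n powr p) powr (1/p) * (\<Sum>n. y n powr q) powr (1/q)"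
proof -
  define A where "A = (\<Sum>n. x n powr p)"
  define B where "B = (\<Sum>n. y n powr q)"
  have A0: "A \<ge> 0" unfolding A_def by (intro suminf_nonneg sx) auto
  have B0: "B \<ge> 0" unfolding B_def by (intro suminf_nonneg sy) auto
  have "summable (\<lambda>n. x n * y n) \<and> (\<Sum>n. x n * y n) \<le> A powr (1/p) * B powr (1/q)"
  proof (cases "A = 0 \<or> B = 0")
    case True
    then have "(\<forall>n. x n powr p = 0) \<or> (\<forall>n. y n powr q = 0)"
      unfolding A_def B_def using suminf_eq_zero_iff[OF sx] suminf_eq_zero_iff[OF sy] by auto
    then have "(\<lambda>n. x n * y n) = (\<lambda>n. 0)" by auto
    then show ?thesis by simp
  next
    case False
    then have A: "A > 0" and B: "B > 0" using A0 B0 by auto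
    define \<alpha> where "\<alpha> = A powr (1/p)"
    define \<beta> where "\<beta> = B powr (1/q)"
    have \<alpha>\<beta>: "\<alpha> > 0" "\<beta> > 0" "\<alpha> powr p = A" "\<beta> powr q = B"
      using A B pq by (auto simp: \<alpha>_def \<beta>_def powr_powr)
    define u where "u n = \<alpha> * \<beta> * (x n powr p / (A * p) + y n powr q / (B * q))" for n
    have le: "x n * y n \<le> u n" for n
      using Youngs_inequality_scaled[OF pq x0[of n] y0[of n] \<alpha>\<beta>(1,2)] \<alpha>\<beta>(3,4) by (simp add: u_def)
    have "u sums (\<alpha> * \<beta> * (A / (A * p) + B / (B * q)))"
      unfolding u_def A_def B_def by (intro sums_mult sums_add sums_divide summable_sums sx sy)
    also have "\<alpha> * \<beta> * (A / (A * p) + B / (B * q)) = \<alpha> * \<beta>"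
      using A B pq by (simp add: field_simps)
    finally have u: "u sums (\<alpha> * \<beta>)" .
    have sxy: "summable (\<lambda>n. x n * y n)"
      by (rule summable_comparison_test'[OF sums_summable[OF u]]) (use le x0 y0 in auto)
    have "(\<Sum>n. x n * y n) \<le> (\<Sum>n. u n)" by (rule suminf_le[OF le sxy sums_summable[OF u]])
    then show ?thesis using sxy u by (simp add: sums_iff \<alpha>_def \<beta>_def)
  qed
  then show "summable (\<lambda>n. x n * y n)"
    and "(\<Sum>n. x n * y n) \<le> (\<Sum>n. x n powr p) powr (1/p) * (\<Sum>n. y n powr q) powr (1/q)"
    by (simp_all add: A_def B_def)
qed

lemma conv_rep_norm_diff_le:
  assumes cr: "conv_rep Zs H \<kappa>" and z: "z \<in> Zs" and z': "z' \<in> Zs"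
    and s: "summable (\<lambda>n. onorm (\<kappa> n) * norm (z' n - z n))"
  shows "norm (H z' - H z) \<le> (\<Sum>n. onorm (\<kappa> n) * norm (z' n - z n))"
proof -
  have bl: "bounded_linear (\<kappa> n)" for n by (rule conv_rep_bounded_linear[OF cr])
  have "(\<lambda>T. (\<Sum>n\<le>T. \<kappa> n (z' n)) - (\<Sum>n\<le>T. \<kappa> n (z n))) \<longlonglongrightarrow> H z' - H z"
    by (intro tendsto_diff conv_rep_tendsto[OF cr] z z')
  then have lim: "(\<lambda>T. \<Sum>n\<le>T. \<kappa> n (z' n - z n)) \<longlonglongrightarrow> H z' - H z"
    by (simp add: sum_subtractf[symmetric] linear_simps[OF bl])
  have "norm (\<Sum>n\<le>T. \<kappa> n (z' n - z n)) \<le> (\<Sum>n. onorm (\<kappa> n) * norm (z' n - z n))" for T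
  proof -
    have "norm (\<Sum>n\<le>T. \<kappa> n (z' n - z n)) \<le> (\<Sum>n\<le>T. onorm (\<kappa> n) * norm (z' n - z n))"
      by (rule order_trans[OF norm_sum sum_mono]) (rule onorm[OF bl])
    also have "\<dots> \<le> (\<Sum>n. onorm (\<kappa> n) * norm (z' n - z n))"
      by (rule sum_le_suminf[OF s]) (auto intro!: mult_nonneg_nonneg onorm_pos_le[OF bl])
    finally show ?thesis .
  qed
  then show ?thesis by (intro LIMSEQ_le_const2[OF tendsto_norm[OF lim]]) auto
qed

lemma cont_wrt_of_Lipschitz:
  assumes K: "K \<ge> 0"
    and Lip: "\<And>z z'. z \<in> Zs \<Longrightarrow> z' \<in> Zs \<Longrightarrow> norm (H z' - H z) \<le> K * N (\<lambda>n. z' n - z n)"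
  shows "cont_wrt N Zs H"
  unfolding cont_wrt_def
proof (intro ballI allI impI)
  fix z and e :: real assume z: "z \<in> Zs" and e: "e > 0"
  have "dist (H z') (H z) < e" if z': "z' \<in> Zs" and d: "N (\<lambda>n. z' n - z n) < e / (K + 1)" for z'
  proof -
    have "dist (H z') (H z) \<le> K * N (\<lambda>n. z' n - z n)" using Lip[OF z z'] by (simp add: dist_norm)
    also have "\<dots> \<le> K * (e / (K + 1))" using d K by (intro mult_left_mono) auto
    also have "\<dots> < e" using e K by (simp add: field_simps)
    finally show ?thesis .
  qed
  moreover have "e / (K + 1) > 0" using e K by simp
  ultimately show "\<exists>d>0. \<forall>z'\<in>Zs. N (\<lambda>n. z' n - z n) < d \<longrightarrow> dist (H z') (H z) < e" by blast
qed

lemma conv_rep_cont_wrt_l1: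
  assumes cr: "conv_rep Zs H \<kappa>" and up: "Zs \<subseteq> lp_space (ereal 1)"
    and w: "\<And>n. 0 \<le> w n \<and> w n \<le> 1" and K: "K \<ge> 0" and \<kappa>w: "\<And>n. onorm (\<kappa> n) \<le> K * w n"
  shows "cont_wrt (lp_w_norm (ereal 1) w) Zs H"
proof (rule cont_wrt_of_Lipschitz[OF K])
  fix z z' assume z: "z \<in> Zs" and z': "z' \<in> Zs"
  have bl: "bounded_linear (\<kappa> n)" for n by (rule conv_rep_bounded_linear[OF cr])
  have "summable (\<lambda>n. norm (z' n - z n))"
    using lp_space_diff_summable[of 1 z z'] z z' up by auto
  then have swd: "summable (\<lambda>n. w n * norm (z' n - z n))"
    by (rule summable_comparison_test') (use w in \<open>auto simp: mult_left_le_one_le\<close>)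
  have le: "onorm (\<kappa> n) * norm (z' n - z n) \<le> K * (w n * norm (z' n - z n))" for n
    using \<kappa>w[of n] by (simp add: mult_right_mono mult.assoc[symmetric])
  have s: "summable (\<lambda>n. onorm (\<kappa> n) * norm (z' n - z n))"
    by (rule summable_comparison_test'[OF summable_mult[OF swd, of K]])
       (use le onorm_pos_le[OF bl] in auto)
  have "norm (H z' - H z) \<le> (\<Sum>n. onorm (\<kappa> n) * norm (z' n - z n))"
    by (rule conv_rep_norm_diff_le[OF cr z z' s])
  also have "\<dots> \<le> (\<Sum>n. K * (w n * norm (z' n - z n)))"
    by (rule suminf_le[OF le s summable_mult[OF swd]])
  also have "\<dots> = K * lp_w_norm (ereal 1) w (\<lambda>n. z' n - z n)"
    using suminf_nonneg[OF swd] w by (simp add: suminf_mult[OF swd] lp_w_norm_def)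
  finally show "norm (H z' - H z) \<le> K * lp_w_norm (ereal 1) w (\<lambda>n. z' n - z n)" .
qed

lemma conv_rep_cont_wrt_lp:
  assumes cr: "conv_rep Zs H \<kappa>" and up: "Zs \<subseteq> lp_space (ereal p)"
    and pq: "p > 1" "q > 1" "1 / p + 1 / q = 1"
    and w: "\<And>n. 0 < w n \<and> w n \<le> 1"
    and \<kappa>w: "summable (\<lambda>n. onorm (\<kappa> n) powr q * w n powr (- (q / p)))"
  shows "cont_wrt (lp_w_norm (ereal p) w) Zs H"
proof (rule cont_wrt_of_Lipschitz)
  have bl: "bounded_linear (\<kappa> n)" for n by (rule conv_rep_bounded_linear[OF cr])
  define K where "K = (\<Sum>n. onorm (\<kappa> n) powr q * w n powr (- (q / p))) powr (1 / q)"
  show "K \<ge> 0" by (simp add: K_def)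
  fix z z' assume z: "z \<in> Zs" and z': "z' \<in> Zs"
  define x where "x n = w n powr (1 / p) * norm (z' n - z n)" for n
  define y where "y n = onorm (\<kappa> n) * w n powr (- (1 / p))" for n
  have xy: "x n * y n = onorm (\<kappa> n) * norm (z' n - z n)" for n
    using w[of n] by (simp add: x_def y_def powr_minus field_simps)
  have xp: "x n powr p = w n * norm (z' n - z n) powr p" for n
    using w[of n] pq by (simp add: x_def powr_mult powr_powr)
  have yq: "y n powr q = onorm (\<kappa> n) powr q * w n powr (- (q / p))" for n
    using w[of n] pq onorm_pos_le[OF bl, of n] by (simp add: y_def powr_mult powr_powr)
  have "summable (\<lambda>n. norm (z' n - z n) powr p)"
    using lp_space_diff_summable[of p z z'] z z' up pq by auto
  then have sx: "summable (\<lambda>n. x n powr p)"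
    unfolding xp by (rule summable_comparison_test')
      (use w in \<open>auto simp: mult_left_le_one_le less_imp_le\<close>)
  have sy: "summable (\<lambda>n. y n powr q)" unfolding yq by (rule \<kappa>w)
  have x0: "x n \<ge> 0" and y0: "y n \<ge> 0" for n
    by (simp_all add: x_def y_def onorm_pos_le[OF bl])
  note Holder = Holder_inequality_series[OF pq x0 y0 sx sy, unfolded xy]
  have "norm (H z' - H z) \<le> (\<Sum>n. onorm (\<kappa> n) * norm (z' n - z n))"
    by (rule conv_rep_norm_diff_le[OF cr z z' Holder(1)])
  also have "\<dots> \<le> (\<Sum>n. x n powr p) powr (1/p) * (\<Sum>n. y n powr q) powr (1/q)" by (rule Holder(2))
  also have "\<dots> = K * lp_w_norm (ereal p) w (\<lambda>n. z' n - z n)"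
    by (simp add: K_def lp_w_norm_def xp yq)
  finally show "norm (H z' - H z) \<le> K * lp_w_norm (ereal p) w (\<lambda>n. z' n - z n)" .
qed

lemma conv_rep_cont_wrt_linfinity:
  assumes cr: "conv_rep Zs H \<kappa>" and up: "Zs \<subseteq> lp_space \<infinity>"
    and w: "\<And>n. 0 < w n \<and> w n \<le> 1" and \<kappa>w: "summable (\<lambda>n. onorm (\<kappa> n) / w n)"
  shows "cont_wrt (lp_w_norm \<infinity> w) Zs H"
proof (rule cont_wrt_of_Lipschitz)
  have bl: "bounded_linear (\<kappa> n)" for n by (rule conv_rep_bounded_linear[OF cr])
  show "(\<Sum>n. onorm (\<kappa> n) / w n) \<ge> 0"
    using w onorm_pos_le[OF bl] by (intro suminf_nonneg[OF \<kappa>w]) (simp add: less_imp_le)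
  fix z z' assume z: "z \<in> Zs" and z': "z' \<in> Zs"
  have "bounded (range (\<lambda>n. norm (z n)))" "bounded (range (\<lambda>n. norm (z' n)))"
    using z z' up by (auto simp: lp_space_def lp_w_mem_def)
  then obtain B B' where B: "\<And>n. norm (z n) \<le> B" and B': "\<And>n. norm (z' n) \<le> B'"
    unfolding bounded_iff by auto
  have "norm (z' n - z n) \<le> B' + B" for n
    using norm_triangle_ineq4[of "z' n" "z n"] B[of n] B'[of n] by simp
  then have bdd: "bounded (range (\<lambda>n. norm (z' n - z n)))" unfolding bounded_iff by auto
  define V where "V = lp_w_norm \<infinity> w (\<lambda>n. z' n - z n)"
  have V: "w n * norm (z' n - z n) \<le> V" for n
    unfolding V_def using bdd w by (intro lp_w_norm_infinity_ge) (auto simp: less_imp_le)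
  have le: "onorm (\<kappa> n) * norm (z' n - z n) \<le> onorm (\<kappa> n) / w n * V" for n
  proof -
    have "onorm (\<kappa> n) * norm (z' n - z n) = onorm (\<kappa> n) / w n * (w n * norm (z' n - z n))"
      using w[of n] by (simp add: field_simps)
    also have "\<dots> \<le> onorm (\<kappa> n) / w n * V"
      using V[of n] w[of n] onorm_pos_le[OF bl, of n] by (intro mult_left_mono) auto
    finally show ?thesis .
  qed
  have s: "summable (\<lambda>n. onorm (\<kappa> n) * norm (z' n - z n))"
    by (rule summable_comparison_test'[OF summable_mult2[OF \<kappa>w, of V]])
       (use le onorm_pos_le[OF bl] in auto)
  have "norm (H z' - H z) \<le> (\<Sum>n. onorm (\<kappa> n) * norm (z' n - z n))"
    by (rule conv_rep_norm_diff_le[OF cr z z' s])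
  also have "\<dots> \<le> (\<Sum>n. onorm (\<kappa> n) / w n * V)"
    by (rule suminf_le[OF le s summable_mult2[OF \<kappa>w]])
  also have "\<dots> = (\<Sum>n. onorm (\<kappa> n) / w n) * V" by (rule suminf_mult2[OF \<kappa>w, symmetric])
  finally show "norm (H z' - H z) \<le> (\<Sum>n. onorm (\<kappa> n) / w n) * lp_w_norm \<infinity> w (\<lambda>n. z' n - z n)"
    by (simp add: V_def)
qed

lemma conv_rep_bounded_imp_p_continuous_l1:
  assumes cr: "conv_rep Zs H \<kappa>" and upper: "Zs \<subseteq> lp_space (ereal 1)"
    and bdd: "bdd_above (range (\<lambda>n. onorm (\<kappa> n)))"
  shows "p_continuous (ereal 1) Zs H"
proof -
  obtain B where "\<And>n. onorm (\<kappa> n) \<le> B" using bdd by (auto simp: bdd_above_def)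
  then have "cont_wrt (lp_w_norm (ereal 1) (\<lambda>_. 1)) Zs H"
    by (intro conv_rep_cont_wrt_l1[OF cr upper, of _ "max 0 B"]) (auto intro: le_max_iff_disj[THEN iffD2])
  then show ?thesis using upper by (simp add: p_continuous_def cont_wrt_lp_norm)
qed

lemma conv_rep_tendsto_zero_imp_p_weighted_FMP_l1:
  assumes cr: "conv_rep Zs H \<kappa>" and upper: "Zs \<subseteq> lp_space (ereal 1)"
    and lim: "(\<lambda>n. onorm (\<kappa> n)) \<longlonglongrightarrow> 0"
  shows "p_weighted_FMP (ereal 1) Zs H"
proof -
  obtain w K where w: "weighting_seq w" and K: "K \<ge> 0" and \<kappa>w: "\<And>n. onorm (\<kappa> n) \<le> K * w n"
    using weighting_seq_dominating[OF onorm_pos_le[OF conv_rep_bounded_linear[OF cr]] lim] by blast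
  have "0 \<le> w n \<and> w n \<le> 1" for n using weighting_seq_bounds[OF w, of n] by simp
  then have "cont_wrt (lp_w_norm (ereal 1) w) Zs H" by (rule conv_rep_cont_wrt_l1[OF cr upper _ K \<kappa>w])
  then show ?thesis using w upper by (auto simp: p_weighted_FMP_def)
qed

lemma conv_rep_summable_powr_imp_p_continuous:
  assumes cr: "conv_rep Zs H \<kappa>" and upper: "Zs \<subseteq> lp_space (ereal p)"
    and pq: "p > 1" "q > 1" "1 / p + 1 / q = 1" and s: "summable (\<lambda>n. onorm (\<kappa> n) powr q)"
  shows "p_continuous (ereal p) Zs H"
proof -
  have "cont_wrt (lp_w_norm (ereal p) (\<lambda>_. 1)) Zs H"
    using s by (intro conv_rep_cont_wrt_lp[OF cr upper pq]) auto
  then show ?thesis using upper by (simp add: p_continuous_def cont_wrt_lp_norm)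
qed

lemma conv_rep_summable_powr_imp_p_weighted_FMP:
  assumes cr: "conv_rep Zs H \<kappa>" and upper: "Zs \<subseteq> lp_space (ereal p)"
    and pq: "p > 1" "q > 1" "1 / p + 1 / q = 1" and s: "summable (\<lambda>n. onorm (\<kappa> n) powr q)"
  shows "p_weighted_FMP (ereal p) Zs H"
proof -
  obtain w where w: "weighting_seq w" and sw: "summable (\<lambda>n. onorm (\<kappa> n) powr q * w n powr (- (q / p)))"
    using weighting_seq_summable_powr[of "\<lambda>n. onorm (\<kappa> n) powr q" "q / p"] s pq by auto
  have "cont_wrt (lp_w_norm (ereal p) w) Zs H"
    using weighting_seq_bounds[OF w] by (intro conv_rep_cont_wrt_lp[OF cr upper pq _ sw])
  then show ?thesis using w upper by (auto simp: p_weighted_FMP_def)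
qed

lemma conv_rep_summable_imp_p_continuous_linfinity:
  assumes cr: "conv_rep Zs H \<kappa>" and upper: "Zs \<subseteq> lp_space \<infinity>"
    and s: "summable (\<lambda>n. onorm (\<kappa> n))"
  shows "p_continuous \<infinity> Zs H"
proof -
  have "cont_wrt (lp_w_norm \<infinity> (\<lambda>_. 1)) Zs H"
    using s by (intro conv_rep_cont_wrt_linfinity[OF cr upper]) auto
  then show ?thesis using upper by (simp add: p_continuous_def cont_wrt_lp_norm)
qed

lemma conv_rep_summable_imp_p_weighted_FMP_linfinity:
  assumes cr: "conv_rep Zs H \<kappa>" and upper: "Zs \<subseteq> lp_space \<infinity>"
    and s: "summable (\<lambda>n. onorm (\<kappa> n))"
  shows "p_weighted_FMP \<infinity> Zs H"
proof -
  obtain w where w: "weighting_seq w" and sw: "summable (\<lambda>n. onorm (\<kappa> n) * w n powr (- 1))"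
    using weighting_seq_summable_powr[of "\<lambda>n. onorm (\<kappa> n)" 1] s
      onorm_pos_le[OF conv_rep_bounded_linear[OF cr]] by auto
  have "summable (\<lambda>n. onorm (\<kappa> n) / w n)"
    using sw weighting_seq_bounds[OF w] by (simp add: powr_minus divide_inverse abs_of_pos)
  then have "cont_wrt (lp_w_norm \<infinity> w) Zs H"
    using weighting_seq_bounds[OF w] by (intro conv_rep_cont_wrt_linfinity[OF cr upper])
  then show ?thesis using w upper by (auto simp: p_weighted_FMP_def)
qed

lemma cont_wrt_imp_minimal:
  assumes cont: "cont_wrt N Zs H" and std: "std_assm Zs"
    and tails: "\<And>z. z \<in> Zs \<Longrightarrow> (\<lambda>T. N (\<lambda>n. trunc T z n - z n)) \<longlonglongrightarrow> 0"
    and delta: "\<And>t u. N (delta t u) \<le> norm u"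
  shows "minimal_FMP Zs H \<and> minimally_continuous Zs H"
proof
  show "minimal_FMP Zs H" unfolding minimal_FMP_def
  proof
    fix z assume z: "z \<in> Zs"
    show "(\<lambda>T. H (trunc T z)) \<longlonglongrightarrow> H z"
    proof (rule tendstoI)
      fix e :: real assume "e > 0"
      then obtain d where "d > 0"
        and d: "\<And>z'. z' \<in> Zs \<Longrightarrow> N (\<lambda>n. z' n - z n) < d \<Longrightarrow> dist (H z') (H z) < e"
        using cont z unfolding cont_wrt_def by metis
      have "\<forall>\<^sub>F T in sequentially. N (\<lambda>n. trunc T z n - z n) < d"
        using order_tendstoD(2)[OF tails[OF z] \<open>d > 0\<close>] .
      then show "\<forall>\<^sub>F T in sequentially. dist (H (trunc T z)) (H z) < e"
        by eventually_elim (use d std_assm_trunc[OF std z] in auto)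
    qed
  qed
  show "minimally_continuous Zs H" unfolding minimally_continuous_def continuous_on_iff
  proof (intro allI ballI impI)
    fix t and u :: 'a and e :: real assume u: "u \<in> cball 0 1" and "e > 0"
    have "delta t u \<in> Zs" using u std_assm_delta[OF std] by simp
    then obtain d where "d > 0"
      and d: "\<And>z'. z' \<in> Zs \<Longrightarrow> N (\<lambda>n. z' n - delta t u n) < d \<Longrightarrow> dist (H z') (H (delta t u)) < e"
      using cont \<open>e > 0\<close> unfolding cont_wrt_def by metis
    have "dist (H (delta t u')) (H (delta t u)) < e" if "u' \<in> cball 0 1" "dist u' u < d" for u'
      using d[of "delta t u'"] delta[of t "u' - u"] that std_assm_delta[OF std]
      by (simp add: delta_diff dist_norm)
    then show "\<exists>d>0. \<forall>u'\<in>cball 0 1. dist u' u < d \<longrightarrow> dist (H (delta t u')) (H (delta t u)) < e"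
      using \<open>d > 0\<close> by blast
  qed
qed

lemma p_continuous_ereal_imp_minimal:
  assumes std: "std_assm Zs" and r: "r > 0" and cont: "p_continuous (ereal r) Zs H"
  shows "minimal_FMP Zs H \<and> minimally_continuous Zs H"
proof (rule cont_wrt_imp_minimal[OF _ std])
  show "cont_wrt (lp_w_norm (ereal r) (\<lambda>_. 1)) Zs H"
    using cont by (simp add: p_continuous_def cont_wrt_lp_norm)
  show "(\<lambda>T. lp_w_norm (ereal r) (\<lambda>_. 1) (\<lambda>n. trunc T z n - z n)) \<longlonglongrightarrow> 0" if "z \<in> Zs" for z
    using that cont r by (intro lp_w_norm_trunc_tendsto_ereal) (auto simp: p_continuous_def)
  show "lp_w_norm (ereal r) (\<lambda>_. 1) (delta t u) \<le> norm u" for t u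
    using r by (intro lp_w_norm_delta_le) auto
qed

lemma p_continuous_infinity_imp_minimal:
  assumes std: "std_assm Zs" and c0: "Zs \<subseteq> c0_seq" and cont: "p_continuous \<infinity> Zs H"
  shows "minimal_FMP Zs H \<and> minimally_continuous Zs H"
proof (rule cont_wrt_imp_minimal[OF _ std])
  show "cont_wrt (lp_w_norm \<infinity> (\<lambda>_. 1)) Zs H"
    using cont by (simp add: p_continuous_def cont_wrt_lp_norm)
  show "(\<lambda>T. lp_w_norm \<infinity> (\<lambda>_. 1) (\<lambda>n. trunc T z n - z n)) \<longlonglongrightarrow> 0" if "z \<in> Zs" for z
    using that c0 by (intro lp_w_norm_trunc_tendsto_infinity) (auto simp: c0_seq_def)
  show "lp_w_norm \<infinity> (\<lambda>_. 1) (delta t u) \<le> norm u" for t u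
    by (intro lp_w_norm_delta_le) auto
qed

lemma p_weighted_FMP_imp_minimal:
  assumes std: "std_assm Zs" and p: "0 < p" and W: "p_weighted_FMP p Zs H"
  shows "minimal_FMP Zs H \<and> minimally_continuous Zs H"
proof -
  obtain w where w: "weighting_seq w" and cont: "cont_wrt (lp_w_norm p w) Zs H"
    and upper: "Zs \<subseteq> lp_space p"
    using W by (auto simp: p_weighted_FMP_def)
  have w01: "0 \<le> w n \<and> w n \<le> 1" for n using weighting_seq_bounds[OF w, of n] by simp
  have "(\<lambda>T. lp_w_norm p w (\<lambda>n. trunc T z n - z n)) \<longlonglongrightarrow> 0" if z: "z \<in> Zs" for z
  proof (cases p)
    case (real r)
    with p z upper have "r > 0" "z \<in> lp_space (ereal r)" by auto
    then show ?thesis using w01 unfolding real by (intro lp_w_norm_trunc_tendsto_ereal)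
  next
    case PInf
    then have "bounded (range (\<lambda>n. norm (z n)))"
      using z upper by (auto simp: lp_space_def lp_w_mem_def)
    then obtain B where "\<And>n. norm (z n) \<le> B" unfolding bounded_iff by auto
    then show ?thesis unfolding PInf using w01
      by (intro lp_w_norm_trunc_tendsto_infinity weighting_seq_mult_bounded_tendsto[OF w]) auto
  qed (use p in simp)
  then show ?thesis using lp_w_norm_delta_le[OF p w01] by (rule cont_wrt_imp_minimal[OF cont std])
qed

lemma conv_rep_onorm_tendsto_zero:
  assumes std: "std_assm Zs" and cr: "conv_rep Zs H \<kappa>" and cont: "cont_wrt N Zs H"
    and delta: "\<And>n u. N (delta n u) \<le> \<epsilon> n * norm u" and \<epsilon>: "\<And>n. 0 \<le> \<epsilon> n" "\<epsilon> \<longlonglongrightarrow> 0"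
  shows "(\<lambda>n. onorm (\<kappa> n)) \<longlonglongrightarrow> 0"
proof (rule LIMSEQ_I)
  fix e :: real assume e: "e > 0"
  have z0: "(\<lambda>n. 0) \<in> Zs" by (rule std_assm_zero[OF std])
  have H0: "H (\<lambda>n. 0) = 0"
    using conv_rep_finite_support[OF cr z0, of "{}"] by simp
  have "\<forall>\<epsilon>>0. \<exists>d>0. \<forall>z'\<in>Zs. N z' < d \<longrightarrow> norm (H z') < \<epsilon>"
    using bspec[OF cont[unfolded cont_wrt_def] z0] H0 by (simp add: dist_norm)
  then obtain d where "d > 0" and d: "\<forall>z'\<in>Zs. N z' < d \<longrightarrow> norm (H z') < e / 2"
    using half_gt_zero[OF e] by blast
  obtain M where M: "\<And>n. n \<ge> M \<Longrightarrow> \<epsilon> n < d"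
    using LIMSEQ_D[OF \<epsilon>(2) \<open>d > 0\<close>] \<epsilon>(1) by auto
  have small: "onorm (\<kappa> n) \<le> e / 2" if "n \<ge> M" for n
  proof (rule onorm_le_of_unit_ball[OF conv_rep_bounded_linear[OF cr]])
    fix u :: 'a assume u: "norm u \<le> 1"
    have "N (delta n u) < d"
      using delta[of n u] M[OF that] \<epsilon>(1)[of n] u mult_left_le[OF u \<epsilon>(1)[of n]] by linarith
    then show "norm (\<kappa> n u) \<le> e / 2"
      using d std_assm_delta[OF std u] conv_rep_delta[OF std cr u] by fastforce
  qed (use e in simp)
  have "norm (onorm (\<kappa> n) - 0) < e" if "n \<ge> M" for n
    using small[OF that] e onorm_pos_le[OF conv_rep_bounded_linear[OF cr], of n] by simp
  then show "\<exists>M. \<forall>n\<ge>M. norm (onorm (\<kappa> n) - 0) < e" by blast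
qed

lemma p_weighted_FMP_l1_imp_onorm_tendsto_zero:
  assumes std: "std_assm Zs" and cr: "conv_rep Zs H \<kappa>" and W: "p_weighted_FMP (ereal 1) Zs H"
  shows "(\<lambda>n. onorm (\<kappa> n)) \<longlonglongrightarrow> 0"
proof -
  obtain w where w: "weighting_seq w" and cont: "cont_wrt (lp_w_norm (ereal 1) w) Zs H"
    using W by (auto simp: p_weighted_FMP_def)
  have "lp_w_norm (ereal 1) w (delta n u) \<le> w n * norm u" for n u
    using weighting_seq_bounds[OF w, of n] by (simp add: lp_w_norm_delta_ereal)
  moreover have "0 \<le> w n" for n using weighting_seq_bounds[OF w, of n] by simp
  ultimately show ?thesis
    using w by (intro conv_rep_onorm_tendsto_zero[OF std cr cont]) (auto simp: weighting_seq_def)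
qed

section \<open>Abel--Dini and resonance\<close>

lemma partial_sums_unbounded:
  fixes d :: "nat \<Rightarrow> real"
  assumes "\<And>n. 0 \<le> d n" and "\<not> summable d"
  obtains n where "(\<Sum>k\<le>n. d k) > B"
  using assms bounded_imp_summable[of d B] by (meson not_le)

lemma not_summable_div_partial_sums:
  fixes d :: "nat \<Rightarrow> real"
  assumes d: "\<And>n. 0 \<le> d n" and s: "s > 0" and ns: "\<not> summable d"
  shows "\<not> summable (\<lambda>n. d n / (s + (\<Sum>k\<le>n. d k)))"
proof
  define S where "S n = s + (\<Sum>k\<le>n. d k)" for n
  have S_mono: "S m \<le> S n" if "m \<le> n" for m n
    unfolding S_def using that d by (intro add_left_mono sum_mono2) auto
  have S_pos: "S n > 0" for n using s d by (simp add: S_def add_pos_nonneg sum_nonneg)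
  assume "summable (\<lambda>n. d n / (s + (\<Sum>k\<le>n. d k)))"
  then obtain N where N: "\<And>m n. m \<ge> N \<Longrightarrow> norm (\<Sum>k=m..<n. d k / S k) < 1/2"
    unfolding summable_Cauchy S_def by (meson half_gt_zero zero_less_one)
  obtain n where n: "(\<Sum>k\<le>n. d k) > 2 * S N" by (rule partial_sums_unbounded[OF d ns])
  then have "S n > 2 * S N" using s by (simp add: S_def)
  with S_pos[of N] S_mono[of n N] have "N < n" by (cases "n \<le> N") auto
  \<comment> \<open>Abel-Dini: on the block \<open>N < k \<le> n\<close> we have \<open>d k / S k \<ge> d k / S n\<close>, summing to \<open>(S n - S N) / S n \<ge> 1/2\<close>\<close>
  have "(\<Sum>k=0..<Suc n. d k) - (\<Sum>k=0..<Suc N. d k) = (\<Sum>k=Suc N..<Suc n. d k)"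
    using \<open>N < n\<close> by (intro sum_diff_nat_ivl) auto
  then have "S n - S N = (\<Sum>k=Suc N..<Suc n. d k)"
    by (simp add: S_def atLeast0LessThan lessThan_Suc_atMost)
  then have "(S n - S N) / S n = (\<Sum>k=Suc N..<Suc n. d k) / S n" by (simp only:)
  also have "\<dots> = (\<Sum>k=Suc N..<Suc n. d k / S n)" by (rule sum_divide_distrib)
  also have "\<dots> \<le> (\<Sum>k=Suc N..<Suc n. d k / S k)"
    using d S_pos S_mono by (intro sum_mono divide_left_mono) auto
  also have "\<dots> < 1/2" using N[of "Suc N" "Suc n"] by simp
  finally have "(S n - S N) / S n < 1/2" .
  moreover have "(S n - S N) / S n \<ge> 1/2"
    using \<open>S n > 2 * S N\<close> S_pos[of n] by (simp add: field_simps)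
  ultimately show False by simp
qed

lemma diff_div_powr_le:
  fixes a b p :: real
  assumes a: "0 < a" and ab: "a \<le> b" and p: "p > 1"
  shows "(b - a) / b powr p \<le> (a powr (1 - p) - b powr (1 - p)) / (p - 1)"
proof -
  have b: "b > 0" using a ab by simp
  define t where "t = a / b"
  have t: "0 < t" "t \<le> 1" using a ab b by (auto simp: t_def)
  have "(p - 1) * (1 - t) \<le> (p - 1) * (- ln t)"
    using ln_le_minus_one[OF t(1)] p by (intro mult_left_mono) auto
  also have "\<dots> = (1 - p) * ln t" by (simp add: algebra_simps)
  also have "\<dots> \<le> exp ((1 - p) * ln t) - 1"
    using exp_ge_add_one_self[of "(1 - p) * ln t"] by linarith
  also have "exp ((1 - p) * ln t) = t powr (1 - p)" using t(1) by (simp add: powr_def)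
  finally have T: "(p - 1) * (1 - t) \<le> t powr (1 - p) - 1" .
  have a_powr: "a powr (1 - p) = t powr (1 - p) * b powr (1 - p)"
    using t b by (simp add: t_def powr_mult[symmetric])
  have "(b - a) / b powr p = (1 - t) * b powr (1 - p)"
    using b by (simp add: powr_diff t_def field_simps)
  also have "\<dots> \<le> (t powr (1 - p) - 1) / (p - 1) * b powr (1 - p)"
    using T p by (intro mult_right_mono) (auto simp: field_simps)
  also have "\<dots> = (a powr (1 - p) - b powr (1 - p)) / (p - 1)"
    by (simp add: a_powr field_simps)
  finally show ?thesis .
qed

lemma summable_div_partial_sums_powr:
  fixes d :: "nat \<Rightarrow> real"
  assumes d: "\<And>n. 0 \<le> d n" and s: "s > 0" and p: "p > 1"
  shows "summable (\<lambda>n. d n / (s + (\<Sum>k\<le>n. d k)) powr p)"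
proof -
  define S where "S n = s + (\<Sum>k\<le>n. d k)" for n
  have S_pos: "S n > 0" for n using s d by (simp add: S_def add_pos_nonneg sum_nonneg)
  have S_Suc: "S (Suc n) = S n + d (Suc n)" for n by (simp add: S_def)
  define g where "g n = S n powr (1 - p) / (p - 1)" for n
  have "d (Suc n) / S (Suc n) powr p \<le> g n - g (Suc n)" for n
    using diff_div_powr_le[of "S n" "S (Suc n)" p] S_pos[of n] d[of "Suc n"] p
    by (simp add: S_Suc g_def diff_divide_distrib)
  then have "summable (\<lambda>n. d (Suc n) / S (Suc n) powr p)"
  proof (intro summableI_nonneg_bounded)
    fix N
    assume le: "\<And>n. d (Suc n) / S (Suc n) powr p \<le> g n - g (Suc n)"
    have "(\<Sum>n<N. d (Suc n) / S (Suc n) powr p) \<le> (\<Sum>n<N. g n - g (Suc n))" by (intro sum_mono le)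
    also have "\<dots> = g 0 - g N" by (rule sum_lessThan_telescope')
    also have "\<dots> \<le> g 0" using p by (simp add: g_def)
    finally show "(\<Sum>n<N. d (Suc n) / S (Suc n) powr p) \<le> g 0" .
  qed (use d in simp)
  then have "summable (\<lambda>n. d (Suc n) / (s + (\<Sum>k\<le>Suc n. d k)) powr p)" by (simp only: S_def)
  then show ?thesis by (subst summable_Suc_iff[symmetric])
qed

fun running_max :: "(nat \<Rightarrow> real) \<Rightarrow> nat \<Rightarrow> real" where
  "running_max c 0 = max 1 (c 0)"
| "running_max c (Suc n) = max (running_max c n) (c (Suc n))"

lemma running_max_ge_one: "running_max c n \<ge> 1"
  by (induction n) auto

lemma running_max_ge: "c n \<le> running_max c n"
  by (cases n) auto

lemma running_max_mono: "m \<le> n \<Longrightarrow> running_max c m \<le> running_max c n"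
  by (induction n) (auto simp: le_Suc_eq intro: order.trans)

lemma exists_summable_not_summable_mult:
  fixes c :: "nat \<Rightarrow> real"
  assumes c: "\<And>n. 0 \<le> c n" and unbounded: "\<not> bdd_above (range c)"
  obtains b where "\<And>n. 0 \<le> b n" "summable b" "\<not> summable (\<lambda>n. b n * c n)"
proof -
  define M where "M = running_max c"
  define d where "d n = (if n = 0 then 0 else M n - M (n - 1))" for n
  have M: "M n \<ge> 1" for n by (simp add: M_def running_max_ge_one)
  have M_eq: "M 0 + (\<Sum>k\<le>n. d k) = M n" for n by (induction n) (auto simp: d_def)
  have d: "0 \<le> d n" for n using running_max_mono[of "n - 1" n c] by (simp add: d_def M_def)
  have "\<not> summable d"
  proof
    assume "summable d"
    then have "c n \<le> M 0 + suminf d" for n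
      using running_max_ge[of c n] M_eq[of n] sum_le_suminf[of d "{..n}"] d
      by (simp add: M_def)
    then have "bdd_above (range c)" by (rule bdd_aboveI2)
    with unbounded show False ..
  qed
  define b where "b n = d n / M n powr 2" for n
  \<comment> \<open>where the running maximum increases, it increases to \<open>c n\<close>\<close>
  have bc: "b n * c n = d n / M n" for n
  proof (cases "d n = 0")
    case False
    then obtain m where "n = Suc m" by (cases n) (auto simp: d_def)
    with False have "M n = c n" by (auto simp: d_def M_def max_def split: if_splits)
    moreover have "M n powr 2 = M n * M n" using M[of n] by (simp add: powr_numeral power2_eq_square)
    ultimately show ?thesis using M[of n] by (simp add: b_def)
  qed (simp add: b_def)
  show ?thesis
  proof (rule that)
    show "0 \<le> b n" for n using d by (simp add: b_def)
    show "summable b"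
      using summable_div_partial_sums_powr[of d "M 0" 2] d M[of 0] by (simp add: M_eq b_def[abs_def])
    show "\<not> summable (\<lambda>n. b n * c n)"
      using not_summable_div_partial_sums[of d "M 0"] d M[of 0] \<open>\<not> summable d\<close> by (simp add: M_eq bc)
  qed
qed

lemma exists_summable_powr_not_summable_mult:
  fixes c :: "nat \<Rightarrow> real"
  assumes pq: "p > 1" "q > 1" "1 / p + 1 / q = 1"
    and c: "\<And>n. 0 \<le> c n" and ns: "\<not> summable (\<lambda>n. c n powr q)"
  obtains b where "\<And>n. 0 \<le> b n" "summable (\<lambda>n. b n powr p)" "\<not> summable (\<lambda>n. b n * c n)"
proof -
  have qp: "(q - 1) * p = q"
  proof -
    have "p * q * (1 / p + 1 / q) = p * q" using pq by simp
    then show ?thesis using pq by (simp add: field_simps)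
  qed
  define S where "S n = 1 + (\<Sum>k\<le>n. c k powr q)" for n
  have S: "S n \<ge> 1" for n by (simp add: S_def sum_nonneg)
  define b where "b n = c n powr (q - 1) / S n" for n
  have b_powr: "b n powr p = c n powr q / S n powr p" for n
    using S[of n] c[of n] qp by (simp add: b_def powr_divide powr_powr)
  have bc: "b n * c n = c n powr q / S n" for n
  proof (cases "c n = 0")
    case False
    then have "c n powr (q - 1) * c n = c n powr q"
      using c[of n] by (simp add: powr_diff powr_one_gt_zero_iff)
    then show ?thesis by (simp add: b_def)
  qed (use pq in \<open>simp add: b_def\<close>)
  show ?thesis
  proof (rule that)
    show "0 \<le> b n" for n using S[of n] by (simp add: b_def)
    show "summable (\<lambda>n. b n powr p)"
      using summable_div_partial_sums_powr[of "\<lambda>n. c n powr q" 1 p] pq by (simp add: b_powr S_def)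
    show "\<not> summable (\<lambda>n. b n * c n)"
      using not_summable_div_partial_sums[of "\<lambda>n. c n powr q" 1] ns by (simp add: bc S_def)
  qed
qed

lemma exists_null_not_summable_mult:
  fixes c :: "nat \<Rightarrow> real"
  assumes c: "\<And>n. 0 \<le> c n" and ns: "\<not> summable c"
  obtains a where "\<And>n. 0 \<le> a n \<and> a n \<le> 1" "a \<longlonglongrightarrow> 0" "\<not> summable (\<lambda>n. a n * c n)"
proof -
  define S where "S n = 1 + (\<Sum>k\<le>n. c k)" for n
  have S: "S n \<ge> 1" for n by (simp add: S_def sum_nonneg c)
  have S_mono: "S m \<le> S n" if "m \<le> n" for m n
    unfolding S_def using that c by (intro add_left_mono sum_mono2) auto
  define a where "a n = 1 / S n" for n
  have "a \<longlonglongrightarrow> 0"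
  proof (rule LIMSEQ_I)
    fix e :: real assume e: "e > 0"
    obtain n0 where "(\<Sum>k\<le>n0. c k) > 1 / e" by (rule partial_sums_unbounded[OF c ns])
    then have "S n > 1 / e" if "n \<ge> n0" for n
      using S_mono[OF that] by (simp add: S_def)
    then have "norm (a n - 0) < e" if "n \<ge> n0" for n
      using that e S[of n] by (simp add: a_def field_simps)
    then show "\<exists>n0. \<forall>n\<ge>n0. norm (a n - 0) < e" by blast
  qed
  moreover have "\<not> summable (\<lambda>n. a n * c n)"
    using not_summable_div_partial_sums[OF c _ ns, of 1] by (simp add: a_def S_def)
  moreover have "0 \<le> a n \<and> a n \<le> 1" for n using S[of n] by (simp add: a_def)
  ultimately show ?thesis using that by blast
qed

lemma conv_rep_summable_mult_onorm:
  assumes cr: "conv_rep Zs H \<kappa>" and lower: "c0_seq \<inter> lp_ball p \<subseteq> Zs" and p: "0 < p"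
    and a: "\<And>n. 0 \<le> a n" "a \<in> c0_seq" "a \<in> lp_ball p"
  shows "summable (\<lambda>n. a n * onorm (\<kappa> n))"
proof -
  have bl: "bounded_linear (\<kappa> n)" for n by (rule conv_rep_bounded_linear[OF cr])
  have "\<forall>n. \<exists>u. norm u \<le> 1 \<and> onorm (\<kappa> n) \<le> 2 * norm (\<kappa> n u)"
    using onorm_le_twice_unit_ball[OF bl] by metis
  then obtain u where u: "\<And>n. norm (u n) \<le> 1" "\<And>n. onorm (\<kappa> n) \<le> 2 * norm (\<kappa> n (u n))"
    by metis
  \<comment> \<open>a test sequence in \<open>c0 \<inter> B^p\<close> along which every \<open>\<kappa> n\<close> almost attains its norm\<close>
  define z where "z n = a n *\<^sub>R u n" for n
  have za: "norm (z n) \<le> norm (a n)" for n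
    using u(1)[of n] a(1)[of n] by (simp add: z_def mult_left_le)
  have "z \<in> Zs" using lower lp_ball_mono[OF p a(3) za] c0_seq_mono[OF a(2) za] by blast
  then have s: "summable (\<lambda>n. norm (\<kappa> n (z n)))" by (rule conv_rep_summable[OF cr])
  show ?thesis
  proof (rule summable_comparison_test'[OF summable_mult[OF s, of 2]])
    fix n
    have "norm (\<kappa> n (z n)) = a n * norm (\<kappa> n (u n))"
      using a(1)[of n] by (simp add: z_def linear_simps[OF bl])
    then show "norm (a n * onorm (\<kappa> n)) \<le> 2 * norm (\<kappa> n (z n))"
      using u(2)[of n] a(1)[of n] onorm_pos_le[OF bl, of n] by (simp add: mult_left_mono mult.left_commute)
  qed
qed

lemma conv_rep_onorm_bounded:
  assumes cr: "conv_rep Zs H \<kappa>" and lower: "c0_seq \<inter> lp_ball (ereal 1) \<subseteq> Zs"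
  shows "bdd_above (range (\<lambda>n. onorm (\<kappa> n)))"
proof (rule ccontr)
  assume unbounded: "\<not> ?thesis"
  obtain b where b: "\<And>n. 0 \<le> b n" "summable b" "\<not> summable (\<lambda>n. b n * onorm (\<kappa> n))"
    using exists_summable_not_summable_mult[of "\<lambda>n. onorm (\<kappa> n)",
        OF onorm_pos_le[OF conv_rep_bounded_linear[OF cr]] unbounded] by blast
  obtain l where l: "l > 0" "(\<lambda>n. b n / l) \<in> lp_ball (ereal 1)"
    using exists_scaled_in_lp_ball[of 1 b] b by auto
  have "(\<lambda>n. b n / l) \<in> c0_seq" by (rule lp_ball_ereal_imp_c0_seq[OF _ l(2)]) simp
  with b(1) l have "summable (\<lambda>n. b n / l * onorm (\<kappa> n))"
    by (intro conv_rep_summable_mult_onorm[OF cr lower]) auto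
  with b(3) l(1) show False by simp
qed

lemma conv_rep_onorm_summable_powr:
  assumes cr: "conv_rep Zs H \<kappa>" and lower: "c0_seq \<inter> lp_ball (ereal p) \<subseteq> Zs"
    and pq: "p > 1" "q > 1" "1 / p + 1 / q = 1"
  shows "summable (\<lambda>n. onorm (\<kappa> n) powr q)"
proof (rule ccontr)
  assume not_summable: "\<not> ?thesis"
  obtain b where b: "\<And>n. 0 \<le> b n" "summable (\<lambda>n. b n powr p)" "\<not> summable (\<lambda>n. b n * onorm (\<kappa> n))"
    using exists_summable_powr_not_summable_mult[OF pq, of "\<lambda>n. onorm (\<kappa> n)",
        OF onorm_pos_le[OF conv_rep_bounded_linear[OF cr]] not_summable] by blast
  obtain l where l: "l > 0" "(\<lambda>n. b n / l) \<in> lp_ball (ereal p)"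
    using exists_scaled_in_lp_ball[of p b] b pq by auto
  have "(\<lambda>n. b n / l) \<in> c0_seq" by (rule lp_ball_ereal_imp_c0_seq[OF _ l(2)]) (use pq in simp)
  with b(1) l pq have "summable (\<lambda>n. b n / l * onorm (\<kappa> n))"
    by (intro conv_rep_summable_mult_onorm[OF cr lower]) auto
  with b(3) l(1) show False by simp
qed

lemma conv_rep_onorm_summable:
  assumes cr: "conv_rep Zs H \<kappa>" and lower: "c0_seq \<inter> lp_ball \<infinity> \<subseteq> Zs"
  shows "summable (\<lambda>n. onorm (\<kappa> n))"
proof (rule ccontr)
  assume not_summable: "\<not> ?thesis"
  obtain a where a: "\<And>n. 0 \<le> a n \<and> a n \<le> 1" "a \<longlonglongrightarrow> 0" "\<not> summable (\<lambda>n. a n * onorm (\<kappa> n))"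
    using exists_null_not_summable_mult[of "\<lambda>n. onorm (\<kappa> n)",
        OF onorm_pos_le[OF conv_rep_bounded_linear[OF cr]] not_summable] by blast
  have "a \<in> c0_seq" using a(2) by (simp add: c0_seq_def tendsto_rabs_zero_iff)
  moreover have "a \<in> lp_ball \<infinity>" using a(1) by (simp add: lp_ball_infinity_iff)
  ultimately have "summable (\<lambda>n. a n * onorm (\<kappa> n))"
    using a(1) by (intro conv_rep_summable_mult_onorm[OF cr lower]) auto
  with a(3) show False ..
qed

context
  fixes Zs :: "(nat \<Rightarrow> 'z::real_normed_vector) set" and H :: "(nat \<Rightarrow> 'z) \<Rightarrow> 'y::real_normed_vector"
  assumes std: "std_assm Zs" and findim: "\<exists>B::'y set. finite B \<and> span B = UNIV"
    and lin: "linear_functional Zs H"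
begin

lemmas conv_rep_iff = conv_rep_iff_minimal[OF std findim lin]

lemma fading_memory_l1:
  assumes p: "p = 1" and lower: "c0_seq \<inter> lp_ball p \<subseteq> Zs" and upper: "Zs \<subseteq> lp_space p"
  shows "(p_weighted_FMP p Zs H \<longleftrightarrow> (\<exists>\<kappa>. conv_rep Zs H \<kappa> \<and> (\<lambda>n. onorm (\<kappa> n)) \<longlonglongrightarrow> 0))
     \<and> (p_continuous p Zs H \<longleftrightarrow> (\<exists>\<kappa>. conv_rep Zs H \<kappa> \<and> bdd_above (range (\<lambda>n. onorm (\<kappa> n)))))
     \<and> (p_continuous p Zs H \<longleftrightarrow> minimal_FMP Zs H \<and> minimally_continuous Zs H)"
proof -
  have p: "p = ereal 1" using p by (simp add: one_ereal_def)
  note lower = lower[unfolded p] and upper = upper[unfolded p]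
  have kernel: "(\<exists>\<kappa>. conv_rep Zs H \<kappa>) \<longleftrightarrow> (\<exists>\<kappa>. conv_rep Zs H \<kappa> \<and> bdd_above (range (\<lambda>n. onorm (\<kappa> n))))"
  proof
    assume "\<exists>\<kappa>. conv_rep Zs H \<kappa>"
    then obtain \<kappa> where "conv_rep Zs H \<kappa>" ..
    moreover from this have "bdd_above (range (\<lambda>n. onorm (\<kappa> n)))" by (rule conv_rep_onorm_bounded[OF _ lower])
    ultimately show "\<exists>\<kappa>. conv_rep Zs H \<kappa> \<and> bdd_above (range (\<lambda>n. onorm (\<kappa> n)))" by blast
  qed blast
  have weighted: "p_weighted_FMP (ereal 1) Zs H \<longleftrightarrow> (\<exists>\<kappa>. conv_rep Zs H \<kappa> \<and> (\<lambda>n. onorm (\<kappa> n)) \<longlonglongrightarrow> 0)"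
  proof
    assume W: "p_weighted_FMP (ereal 1) Zs H"
    then have "\<exists>\<kappa>. conv_rep Zs H \<kappa>"
      using p_weighted_FMP_imp_minimal[OF std, of "ereal 1"] conv_rep_iff by simp
    then obtain \<kappa> where "conv_rep Zs H \<kappa>" ..
    then show "\<exists>\<kappa>. conv_rep Zs H \<kappa> \<and> (\<lambda>n. onorm (\<kappa> n)) \<longlonglongrightarrow> 0"
      using p_weighted_FMP_l1_imp_onorm_tendsto_zero[OF std _ W] by blast
  qed (use conv_rep_tendsto_zero_imp_p_weighted_FMP_l1[OF _ upper] in blast)
  have continuous: "p_continuous (ereal 1) Zs H \<longleftrightarrow> (\<exists>\<kappa>. conv_rep Zs H \<kappa>)"
  proof
    assume "p_continuous (ereal 1) Zs H"
    then show "\<exists>\<kappa>. conv_rep Zs H \<kappa>"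
      using p_continuous_ereal_imp_minimal[OF std, of 1] conv_rep_iff by simp
  qed (use kernel conv_rep_bounded_imp_p_continuous_l1[OF _ upper] in blast)
  show ?thesis unfolding p weighted continuous kernel[symmetric] conv_rep_iff by simp
qed

lemma fading_memory_lp:
  assumes p: "1 < p \<and> p < \<infinity>" and q: "1 < q \<and> 1 / real_of_ereal p + 1 / q = 1"
    and lower: "c0_seq \<inter> lp_ball p \<subseteq> Zs" and upper: "Zs \<subseteq> lp_space p"
  shows "(p_weighted_FMP p Zs H \<longleftrightarrow> p_continuous p Zs H)
     \<and> (p_continuous p Zs H \<longleftrightarrow> (\<exists>\<kappa>. conv_rep Zs H \<kappa> \<and> summable (\<lambda>n. onorm (\<kappa> n) powr q)))
     \<and> (p_continuous p Zs H \<longleftrightarrow> minimal_FMP Zs H \<and> minimally_continuous Zs H)"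
proof -
  obtain r where r: "p = ereal r" using p by (cases p) auto
  have pq: "r > 1" "q > 1" "1 / r + 1 / q = 1" using p q by (simp_all add: r)
  note lower = lower[unfolded r] and upper = upper[unfolded r]
  have kernel: "(\<exists>\<kappa>. conv_rep Zs H \<kappa>) \<longleftrightarrow> (\<exists>\<kappa>. conv_rep Zs H \<kappa> \<and> summable (\<lambda>n. onorm (\<kappa> n) powr q))"
    using conv_rep_onorm_summable_powr[OF _ lower pq] by blast
  have weighted: "p_weighted_FMP (ereal r) Zs H \<longleftrightarrow> (\<exists>\<kappa>. conv_rep Zs H \<kappa>)"
  proof
    assume "p_weighted_FMP (ereal r) Zs H"
    then show "\<exists>\<kappa>. conv_rep Zs H \<kappa>"
      using p_weighted_FMP_imp_minimal[OF std, of "ereal r"] conv_rep_iff pq by simp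
  qed (use kernel conv_rep_summable_powr_imp_p_weighted_FMP[OF _ upper pq] in blast)
  have continuous: "p_continuous (ereal r) Zs H \<longleftrightarrow> (\<exists>\<kappa>. conv_rep Zs H \<kappa>)"
  proof
    assume "p_continuous (ereal r) Zs H"
    then show "\<exists>\<kappa>. conv_rep Zs H \<kappa>"
      using p_continuous_ereal_imp_minimal[OF std, of r] conv_rep_iff pq by simp
  qed (use kernel conv_rep_summable_powr_imp_p_continuous[OF _ upper pq] in blast)
  show ?thesis unfolding r weighted continuous kernel[symmetric] conv_rep_iff by simp
qed

lemma fading_memory_linfinity:
  assumes p: "p = \<infinity>" and lower: "c0_seq \<inter> lp_ball p \<subseteq> Zs" and upper: "Zs \<subseteq> lp_space p"
  shows "(p_weighted_FMP p Zs H \<longleftrightarrow> (\<exists>\<kappa>. conv_rep Zs H \<kappa> \<and> summable (\<lambda>n. onorm (\<kappa> n))))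
     \<and> (p_weighted_FMP p Zs H \<longleftrightarrow> minimal_FMP Zs H \<and> minimally_continuous Zs H)
     \<and> (Zs \<subseteq> c0_seq \<longrightarrow> (p_weighted_FMP p Zs H \<longleftrightarrow> p_continuous p Zs H))"
proof -
  note lower = lower[unfolded p] and upper = upper[unfolded p]
  have kernel: "(\<exists>\<kappa>. conv_rep Zs H \<kappa>) \<longleftrightarrow> (\<exists>\<kappa>. conv_rep Zs H \<kappa> \<and> summable (\<lambda>n. onorm (\<kappa> n)))"
    using conv_rep_onorm_summable[OF _ lower] by blast
  have weighted: "p_weighted_FMP \<infinity> Zs H \<longleftrightarrow> (\<exists>\<kappa>. conv_rep Zs H \<kappa>)"
  proof
    assume "p_weighted_FMP \<infinity> Zs H"
    then show "\<exists>\<kappa>. conv_rep Zs H \<kappa>"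
      using p_weighted_FMP_imp_minimal[OF std, of \<infinity>] conv_rep_iff by simp
  qed (use kernel conv_rep_summable_imp_p_weighted_FMP_linfinity[OF _ upper] in blast)
  have "p_continuous \<infinity> Zs H \<longleftrightarrow> (\<exists>\<kappa>. conv_rep Zs H \<kappa>)" if "Zs \<subseteq> c0_seq"
  proof
    assume "p_continuous \<infinity> Zs H"
    then show "\<exists>\<kappa>. conv_rep Zs H \<kappa>"
      using p_continuous_infinity_imp_minimal[OF std that] conv_rep_iff by simp
  qed (use kernel conv_rep_summable_imp_p_continuous_linfinity[OF _ upper] in blast)
  then show ?thesis unfolding p weighted kernel[symmetric] conv_rep_iff by simp
qed

end

theorem theorem3p10:
  fixes Zs :: "(nat \<Rightarrow> 'z::real_normed_vector) set"
    and H :: "(nat \<Rightarrow> 'z) \<Rightarrow> 'y::real_normed_vector"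
    and p :: ereal
  assumes std: "std_assm Zs"
    and findim: "\<exists>B::'y set. finite B \<and> span B = UNIV"
    and p1: "1 \<le> p"
    and lower: "c0_seq \<inter> lp_ball p \<subseteq> Zs"
    and upper: "Zs \<subseteq> lp_space p"
    and lin: "linear_functional Zs H"
  shows
   "(p = 1 \<longrightarrow>
       (p_weighted_FMP p Zs H \<longleftrightarrow> (\<exists>\<kappa>. conv_rep Zs H \<kappa> \<and> (\<lambda>n. onorm (\<kappa> n)) \<longlonglongrightarrow> 0))
     \<and> (p_continuous p Zs H \<longleftrightarrow> (\<exists>\<kappa>. conv_rep Zs H \<kappa> \<and> bdd_above (range (\<lambda>n. onorm (\<kappa> n)))))
     \<and> (p_continuous p Zs H \<longleftrightarrow> minimal_FMP Zs H \<and> minimally_continuous Zs H))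
  \<and> (1 < p \<and> p < \<infinity> \<longrightarrow>
       (\<forall>q::real. 1 < q \<and> 1 / real_of_ereal p + 1 / q = 1 \<longrightarrow>
          (p_weighted_FMP p Zs H \<longleftrightarrow> p_continuous p Zs H)
        \<and> (p_continuous p Zs H \<longleftrightarrow> (\<exists>\<kappa>. conv_rep Zs H \<kappa> \<and> summable (\<lambda>n. onorm (\<kappa> n) powr q)))
        \<and> (p_continuous p Zs H \<longleftrightarrow> minimal_FMP Zs H \<and> minimally_continuous Zs H)))
  \<and> (p = \<infinity> \<longrightarrow>
       (p_weighted_FMP p Zs H \<longleftrightarrow> (\<exists>\<kappa>. conv_rep Zs H \<kappa> \<and> summable (\<lambda>n. onorm (\<kappa> n))))
     \<and> (p_weighted_FMP p Zs H \<longleftrightarrow> minimal_FMP Zs H \<and> minimally_continuous Zs H)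
     \<and> (Zs \<subseteq> c0_seq \<longrightarrow> (p_weighted_FMP p Zs H \<longleftrightarrow> p_continuous p Zs H)))"
proof -
  note l1 = fading_memory_l1[OF std findim lin _ lower upper]
    and lp = fading_memory_lp[OF std findim lin _ _ lower upper]
    and linfinity = fading_memory_linfinity[OF std findim lin _ lower upper]
  show ?thesis by (intro conjI[OF impI conjI[OF impI impI]] allI impI l1 lp linfinity)
qed

end
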